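(* Fix a vertex $v\in\mathbb{Z}_n$. For $M,N\in\operatorname{CM}(A)$ there is a short exact sequence of $\mathbb{C}$-vector spaces $$0\to K_v(M,N)\to\operatorname{Hom}_A(M,\omega N)\to\operatorname{Ext}^1_A(M,N)\to 0,$$ where the second map is the connecting homomorphism of the sequence $0\to N\to J_vN\to\omega N\to0$.
   Context: Fix integers $1\le m<n$. Let $Q$ be the quiver with vertex set $\mathbb{Z}_n$ and arrows $x_a\colon a-1\to a$ and $y_a\colon a\to a-1$ for $a\in\{1,\dots,n\}$. Let $A$ be the quotient of the complete path algebra $\widehat{\mathbb{C}Q}$ by the relations $xy=yx$ and $x^m=y^{n-m}$ at every vertex; its centre is $Z=\mathbb{C}[[t]]$, $t=xy$, and $e_j$ denotes the primitive idempotent at vertex $j$. $\operatorname{CM}(A)$ is the category of finitely generated $A$-modules that are free as $Z$-modules. For $N\in\operatorname{CM}(A)$, $J_vN:=\operatorname{Hom}_Z(e_vA,e_vN)$, the unit map $N\to J_vN$ is injective, and $\omega N$ denotes its (finite-dimensional) cokernel. $K_v(M,N)$ is the cokernel of the injective restriction map $\operatorname{Hom}_A(M,N)\to\operatorname{Hom}_Z(e_vM,e_vN)$. *)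

theory Defs
  imports Complex_Main "HOL-Computational_Algebra.Formal_Power_Series"
begin

section \<open>The complete path algebra of the cyclic double quiver on Z_n\<close>

text \<open>Vertices are integers 0..n-1 (representing Z_n). Arrow X = x_a : a-1 -> a
  (increments the vertex), arrow Y = y_a : a -> a-1 (decrements). A path is its start
  vertex together with the word of arrows in the order they are traversed.
  An element of the complete path algebra is an arbitrary (possibly infinite) formal
  combination of paths, i.e. a function from paths to complex numbers vanishing on
  paths with an invalid start vertex.\<close>

datatype arr = X | Y

type_synonym path = "int \<times> arr list"
type_synonym qel = "path \<Rightarrow> complex"

definition pend :: "nat \<Rightarrow> int \<Rightarrow> arr list \<Rightarrow> int" where
  "pend n s w = (s + int (length (filter (\<lambda>a. a = X) w))
                   - int (length (filter (\<lambda>a. a = Y) w))) mod int n"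

definition CQ :: "nat \<Rightarrow> qel set" where
  "CQ n = {f. \<forall>s w. \<not> (0 \<le> s \<and> s < int n) \<longrightarrow> f (s, w) = 0}"

text \<open>Algebra product f*g: first traverse (a path of) g, then (a path of) f.\<close>
definition qmul :: "nat \<Rightarrow> qel \<Rightarrow> qel \<Rightarrow> qel" where
  "qmul n f g = (\<lambda>(s, w). \<Sum>k\<in>{0..length w}. g (s, take k w) * f (pend n s (take k w), drop k w))"

definition qadd :: "qel \<Rightarrow> qel \<Rightarrow> qel" where
  "qadd f g = (\<lambda>p. f p + g p)"

definition qzero :: qel where "qzero = (\<lambda>p. 0)"

definition ev :: "int \<Rightarrow> qel" where
  "ev j = (\<lambda>p. if p = (j, []) then 1 else 0)"

definition qscal :: "nat \<Rightarrow> complex \<Rightarrow> qel" where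
  "qscal n c = (\<lambda>(s, w). if w = [] \<and> 0 \<le> s \<and> s < int n then c else 0)"

definition qone :: "nat \<Rightarrow> qel" where "qone n = qscal n 1"

text \<open>Relations at vertex j: e_j(xy - yx)e_j and e_j(x^m - y^(n-m))e_j.\<close>
definition rel1 :: "int \<Rightarrow> qel" where
  "rel1 j = (\<lambda>p. (if p = (j, [Y, X]) then 1 else 0) - (if p = (j, [X, Y]) then 1 else 0))"

definition rel2 :: "nat \<Rightarrow> nat \<Rightarrow> int \<Rightarrow> qel" where
  "rel2 n m j = (\<lambda>p. (if p = (j, replicate m X) then 1 else 0)
                   - (if p = (j, replicate (n - m) Y) then 1 else 0))"

inductive_set relI :: "nat \<Rightarrow> nat \<Rightarrow> qel set" for n m where
  relI_zero: "qzero \<in> relI n m"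
| relI_1: "\<lbrakk>a \<in> CQ n; b \<in> CQ n; 0 \<le> j; j < int n; c \<in> relI n m\<rbrakk>
            \<Longrightarrow> qadd (qmul n a (qmul n (rel1 j) b)) c \<in> relI n m"
| relI_2: "\<lbrakk>a \<in> CQ n; b \<in> CQ n; 0 \<le> j; j < int n; c \<in> relI n m\<rbrakk>
            \<Longrightarrow> qadd (qmul n a (qmul n (rel2 n m j) b)) c \<in> relI n m"

text \<open>Its closure in the arrow-ideal-adic topology; A = CQ / Ibar.\<close>
definition Ibar :: "nat \<Rightarrow> nat \<Rightarrow> qel set" where
  "Ibar n m = {f \<in> CQ n. \<forall>k. \<exists>g \<in> relI n m. \<forall>p. length (snd p) < k \<longrightarrow> f p = g p}"

text \<open>The element sum_k z_k t^k of the centre Z = C[[t]], where t = xy.\<close>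
definition zelt :: "nat \<Rightarrow> complex fps \<Rightarrow> qel" where
  "zelt n z = (\<lambda>(s, w). if 0 \<le> s \<and> s < int n \<and> w = concat (replicate (length w div 2) [Y, X])
                        then fps_nth z (length w div 2) else 0)"

record 'm amod =
  mcar :: "'m set"
  madd :: "'m \<Rightarrow> 'm \<Rightarrow> 'm"
  mzero :: "'m"
  mact :: "qel \<Rightarrow> 'm \<Rightarrow> 'm"

text \<open>A left A-module = a left module over the complete path algebra annihilated by Ibar.\<close>
definition is_mod :: "nat \<Rightarrow> nat \<Rightarrow> ('m, 'z) amod_scheme \<Rightarrow> bool" where
  "is_mod n m M \<longleftrightarrow>
     mzero M \<in> mcar M \<and>
     (\<forall>x\<in>mcar M. \<forall>y\<in>mcar M. madd M x y \<in> mcar M) \<and>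
     (\<forall>a\<in>CQ n. \<forall>x\<in>mcar M. mact M a x \<in> mcar M) \<and>
     (\<forall>x\<in>mcar M. \<forall>y\<in>mcar M. \<forall>z\<in>mcar M. madd M (madd M x y) z = madd M x (madd M y z)) \<and>
     (\<forall>x\<in>mcar M. \<forall>y\<in>mcar M. madd M x y = madd M y x) \<and>
     (\<forall>x\<in>mcar M. madd M (mzero M) x = x) \<and>
     (\<forall>x\<in>mcar M. \<exists>y\<in>mcar M. madd M x y = mzero M) \<and>
     (\<forall>a\<in>CQ n. \<forall>x\<in>mcar M. \<forall>y\<in>mcar M. mact M a (madd M x y) = madd M (mact M a x) (mact M a y)) \<and>
     (\<forall>a\<in>CQ n. \<forall>b\<in>CQ n. \<forall>x\<in>mcar M. mact M (qadd a b) x = madd M (mact M a x) (mact M b x)) \<and>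
     (\<forall>a\<in>CQ n. \<forall>b\<in>CQ n. \<forall>x\<in>mcar M. mact M (qmul n a b) x = mact M a (mact M b x)) \<and>
     (\<forall>x\<in>mcar M. mact M (qone n) x = x) \<and>
     (\<forall>a\<in>Ibar n m. \<forall>x\<in>mcar M. mact M a x = mzero M)"

definition msum :: "('m, 'z) amod_scheme \<Rightarrow> 'm list \<Rightarrow> 'm" where
  "msum M xs = foldr (madd M) xs (mzero M)"

definition fin_gen :: "nat \<Rightarrow> ('m, 'z) amod_scheme \<Rightarrow> bool" where
  "fin_gen n M \<longleftrightarrow> (\<exists>gs. set gs \<subseteq> mcar M \<and>
     (\<forall>x\<in>mcar M. \<exists>as. length as = length gs \<and> set as \<subseteq> CQ n \<and>
        x = msum M (map2 (mact M) as gs)))"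

definition Z_free :: "nat \<Rightarrow> ('m, 'z) amod_scheme \<Rightarrow> bool" where
  "Z_free n M \<longleftrightarrow> (\<exists>bs. distinct bs \<and> set bs \<subseteq> mcar M \<and>
     (\<forall>x\<in>mcar M. \<exists>zs. length zs = length bs \<and>
        x = msum M (map2 (\<lambda>z b. mact M (zelt n z) b) zs bs)) \<and>
     (\<forall>zs. length zs = length bs \<and> msum M (map2 (\<lambda>z b. mact M (zelt n z) b) zs bs) = mzero M
        \<longrightarrow> (\<forall>z\<in>set zs. z = 0)))"

definition CM :: "nat \<Rightarrow> nat \<Rightarrow> ('m, 'z) amod_scheme \<Rightarrow> bool" where
  "CM n m M \<longleftrightarrow> is_mod n m M \<and> fin_gen n M \<and> Z_free n M"

definition hom :: "nat \<Rightarrow> ('m, 'z) amod_scheme \<Rightarrow> ('k, 'y) amod_scheme \<Rightarrow> ('m \<Rightarrow> 'k) set" where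
  "hom n M N = {f. f \<in> extensional (mcar M) \<and> f ` mcar M \<subseteq> mcar N \<and>
     (\<forall>x\<in>mcar M. \<forall>y\<in>mcar M. f (madd M x y) = madd N (f x) (f y)) \<and>
     (\<forall>a\<in>CQ n. \<forall>x\<in>mcar M. f (mact M a x) = mact N a (f x))}"

definition eV :: "('m, 'z) amod_scheme \<Rightarrow> int \<Rightarrow> 'm set" where
  "eV M v = mact M (ev v) ` mcar M"

definition homZ :: "nat \<Rightarrow> int \<Rightarrow> ('m, 'z) amod_scheme \<Rightarrow> ('k, 'y) amod_scheme \<Rightarrow> ('m \<Rightarrow> 'k) set" where
  "homZ n v M N = {h. h \<in> extensional (eV M v) \<and> h ` eV M v \<subseteq> eV N v \<and>
     (\<forall>x\<in>eV M v. \<forall>y\<in>eV M v. h (madd M x y) = madd N (h x) (h y)) \<and>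
     (\<forall>z. \<forall>x\<in>eV M v. h (mact M (zelt n z) x) = mact N (zelt n z) (h x))}"

text \<open>Restriction map Hom_A(M,N) -> Hom_Z(e_v M, e_v N); K_v(M,N) is its cokernel.\<close>
definition resv :: "int \<Rightarrow> ('m, 'z) amod_scheme \<Rightarrow> ('m \<Rightarrow> 'k) \<Rightarrow> ('m \<Rightarrow> 'k)" where
  "resv v M f = restrict f (eV M v)"

text \<open>e_v A, represented inside the path algebra (A-classes of its elements).\<close>
definition eA :: "nat \<Rightarrow> int \<Rightarrow> qel set" where
  "eA n v = {qmul n (ev v) b | b. b \<in> CQ n}"

text \<open>J_v N = Hom_Z(e_v A, e_v N) with (a.phi)(b) = phi(b a). A Z-linear map on
  e_v A = e_v CQ / e_v Ibar is a Z-linear map on e_v CQ vanishing on e_v CQ \<inter> Ibar.\<close>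
definition Jmod :: "nat \<Rightarrow> nat \<Rightarrow> int \<Rightarrow> ('k, 'y) amod_scheme \<Rightarrow> (qel \<Rightarrow> 'k) amod" where
  "Jmod n m v N = \<lparr>
     mcar = {\<phi>. \<phi> \<in> extensional (eA n v) \<and> \<phi> ` eA n v \<subseteq> eV N v \<and>
        (\<forall>b\<in>eA n v. \<forall>c\<in>eA n v. \<phi> (qadd b c) = madd N (\<phi> b) (\<phi> c)) \<and>
        (\<forall>z. \<forall>b\<in>eA n v. \<phi> (qmul n (zelt n z) b) = mact N (zelt n z) (\<phi> b)) \<and>
        (\<forall>b\<in>eA n v \<inter> Ibar n m. \<phi> b = mzero N)},
     madd = (\<lambda>\<phi> \<psi>. restrict (\<lambda>b. madd N (\<phi> b) (\<psi> b)) (eA n v)),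
     mzero = restrict (\<lambda>b. mzero N) (eA n v),
     mact = (\<lambda>a \<phi>. restrict (\<lambda>b. \<phi> (qmul n b a)) (eA n v)) \<rparr>"

definition unitJ :: "nat \<Rightarrow> int \<Rightarrow> ('k, 'y) amod_scheme \<Rightarrow> 'k \<Rightarrow> (qel \<Rightarrow> 'k)" where
  "unitJ n v N x = restrict (\<lambda>b. mact N b x) (eA n v)"

definition coset :: "('m, 'z) amod_scheme \<Rightarrow> 'm set \<Rightarrow> 'm \<Rightarrow> 'm set" where
  "coset M S x = {madd M x s | s. s \<in> S}"

definition quotmod :: "('m, 'z) amod_scheme \<Rightarrow> 'm set \<Rightarrow> 'm set amod" where
  "quotmod M S = \<lparr>
     mcar = coset M S ` mcar M,
     madd = (\<lambda>P Q. coset M S (madd M (SOME x. x \<in> P) (SOME y. y \<in> Q))),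
     mzero = coset M S (mzero M),
     mact = (\<lambda>a P. coset M S (mact M a (SOME x. x \<in> P))) \<rparr>"

definition omega :: "nat \<Rightarrow> nat \<Rightarrow> int \<Rightarrow> ('k, 'y) amod_scheme \<Rightarrow> (qel \<Rightarrow> 'k) set amod" where
  "omega n m v N = quotmod (Jmod n m v N) (unitJ n v N ` mcar N)"

text \<open>Every extension 0 -> N -> E -> M -> 0 is isomorphic (as an extension) to one whose
  underlying set is N x M with inclusion x |-> (x,0) and projection (x,y) |-> y.\<close>
definition ext_inc :: "('m, 'z) amod_scheme \<Rightarrow> ('k, 'y) amod_scheme \<Rightarrow> 'k \<Rightarrow> 'k \<times> 'm" where
  "ext_inc M N = restrict (\<lambda>x. (x, mzero M)) (mcar N)"

definition ext_proj :: "('m, 'z) amod_scheme \<Rightarrow> ('k, 'y) amod_scheme \<Rightarrow> 'k \<times> 'm \<Rightarrow> 'm" where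
  "ext_proj M N = restrict snd (mcar N \<times> mcar M)"

definition is_ext :: "nat \<Rightarrow> nat \<Rightarrow> ('m, 'z) amod_scheme \<Rightarrow> ('k, 'y) amod_scheme \<Rightarrow> ('k \<times> 'm) amod \<Rightarrow> bool" where
  "is_ext n m M N E \<longleftrightarrow> mcar E = mcar N \<times> mcar M \<and> is_mod n m E \<and>
     ext_inc M N \<in> hom n N E \<and> ext_proj M N \<in> hom n E M"

text \<open>The class of E is zero in Ext^1_A(M,N) iff E splits.\<close>
definition ext_splits :: "nat \<Rightarrow> ('m, 'z) amod_scheme \<Rightarrow> ('k, 'y) amod_scheme \<Rightarrow> ('k \<times> 'm) amod \<Rightarrow> bool" where
  "ext_splits n M N E \<longleftrightarrow> (\<exists>s\<in>hom n M E. \<forall>y\<in>mcar M. ext_proj M N (s y) = y)"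

text \<open>E represents delta(f), the image of f : M -> omega N under the connecting
  homomorphism of 0 -> N -> J_v N -> omega N -> 0, i.e. the pullback of that sequence
  along f: there is a morphism of extensions from E to that sequence lying over f.\<close>
definition represents_delta :: "nat \<Rightarrow> nat \<Rightarrow> int \<Rightarrow> ('m, 'z) amod_scheme \<Rightarrow> ('k, 'y) amod_scheme
    \<Rightarrow> ('k \<times> 'm) amod \<Rightarrow> ('m \<Rightarrow> (qel \<Rightarrow> 'k) set) \<Rightarrow> bool" where
  "represents_delta n m v M N E f \<longleftrightarrow>
     (\<exists>g\<in>hom n E (Jmod n m v N).
        (\<forall>x\<in>mcar N. g (x, mzero M) = unitJ n v N x) \<and>
        (\<forall>x\<in>mcar N. \<forall>y\<in>mcar M. g (x, y) \<in> f y))"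

definition homZ_lc :: "nat \<Rightarrow> int \<Rightarrow> ('m, 'z) amod_scheme \<Rightarrow> ('k, 'y) amod_scheme
    \<Rightarrow> complex \<Rightarrow> ('m \<Rightarrow> 'k) \<Rightarrow> ('m \<Rightarrow> 'k) \<Rightarrow> ('m \<Rightarrow> 'k)" where
  "homZ_lc n v M N c h h' = restrict (\<lambda>x. madd N (mact N (qscal n c) (h x)) (h' x)) (eV M v)"

definition hom_lc :: "nat \<Rightarrow> ('m, 'z) amod_scheme \<Rightarrow> ('k, 'y) amod_scheme
    \<Rightarrow> complex \<Rightarrow> ('m \<Rightarrow> 'k) \<Rightarrow> ('m \<Rightarrow> 'k) \<Rightarrow> ('m \<Rightarrow> 'k)" where
  "hom_lc n M T c f g = restrict (\<lambda>x. madd T (mact T (qscal n c) (f x)) (g x)) (mcar M)"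

definition hom_zero :: "('m, 'z) amod_scheme \<Rightarrow> ('k, 'y) amod_scheme \<Rightarrow> ('m \<Rightarrow> 'k)" where
  "hom_zero M T = restrict (\<lambda>x. mzero T) (mcar M)"

end

theory Submission
  imports Defs
begin

(* The map \<psi> (omega_map below) sends h \<in> Hom_Z(e_v M, e_v N) to the composite of its adjunct
   x \<mapsto> (b \<mapsto> h (b x)) : M \<rightarrow> J_v N with the quotient map J_v N \<rightarrow> \<omega>N. The adjunct factors through
   the unit N \<rightarrow> J_v N exactly when h is the restriction of an A-linear map M \<rightarrow> N; here the unit is
   injective because N is Z-free.
   Since M is Z-free, an extension 0 \<rightarrow> N \<rightarrow> E \<rightarrow> M \<rightarrow> 0 has a Z-linear retraction r : E \<rightarrow> N, and
   p \<mapsto> (b \<mapsto> e_v r(b p)) is an A-linear map E \<rightarrow> J_v N extending the unit, so every extension is a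
   pullback of 0 \<rightarrow> N \<rightarrow> J_v N \<rightarrow> \<omega>N \<rightarrow> 0. The pullback along \<psi> h splits via the adjunct of h;
   conversely, if the pullback along f splits by s and g : E \<rightarrow> J_v N lies over f, then evaluating
   g \<circ> s at e_v gives h with \<psi> h = f. *)

lemma pend_range: "0 < n \<Longrightarrow> 0 \<le> pend n s w \<and> pend n s w < int n"
  by (simp add: pend_def)

lemma pend_append: "pend n s (u @ w) = pend n (pend n s u) w"
proof -
  have "\<And>x c d k::int. (c + x mod k - d) mod k = (c + x - d) mod k"
    by (metis mod_add_right_eq mod_diff_left_eq)
  then show ?thesis
    unfolding pend_def by (simp add: algebra_simps)
qed

lemma pend_Nil: "0 \<le> s \<Longrightarrow> s < int n \<Longrightarrow> pend n s [] = s"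
  by (simp add: pend_def)

definition qmono :: "int \<Rightarrow> arr list \<Rightarrow> qel" where
  "qmono s w = (\<lambda>p. if p = (s, w) then 1 else 0)"

lemma qmono_CQ: "0 \<le> s \<Longrightarrow> s < int n \<Longrightarrow> qmono s w \<in> CQ n"
  by (auto simp: CQ_def qmono_def)

lemma ev_CQ: "0 \<le> s \<Longrightarrow> s < int n \<Longrightarrow> ev s \<in> CQ n"
  unfolding CQ_def ev_def by auto

lemma qscal_CQ: "qscal n c \<in> CQ n"
  by (auto simp: CQ_def qscal_def)

lemma zelt_CQ: "zelt n z \<in> CQ n"
  by (auto simp: CQ_def zelt_def)

lemma rel1_CQ: "0 \<le> j \<Longrightarrow> j < int n \<Longrightarrow> rel1 j \<in> CQ n"
  by (auto simp: CQ_def rel1_def)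

lemma qadd_CQ: "a \<in> CQ n \<Longrightarrow> b \<in> CQ n \<Longrightarrow> qadd a b \<in> CQ n"
  by (auto simp: CQ_def qadd_def)

lemma qmul_CQ: "b \<in> CQ n \<Longrightarrow> qmul n a b \<in> CQ n"
  by (auto simp: CQ_def qmul_def)

lemma qadd_qzero: "qadd f qzero = f"
  by (simp add: qadd_def qzero_def)

lemma qmul_ev_left: "qmul n (ev v) b (s, w) = (if pend n s w = v then b (s, w) else 0)"
proof -
  have "qmul n (ev v) b (s, w) =
      (\<Sum>k\<in>{0..length w}. if k = length w then b (s, w) * (if pend n s w = v then 1 else 0) else 0)"
    unfolding qmul_def ev_def prod.case by (intro sum.cong) auto
  then show ?thesis by simp
qed

lemma eA_eq: "eA n v = {f \<in> CQ n. \<forall>s w. pend n s w \<noteq> v \<longrightarrow> f (s, w) = 0}"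
proof
  show "eA n v \<subseteq> {f \<in> CQ n. \<forall>s w. pend n s w \<noteq> v \<longrightarrow> f (s, w) = 0}"
    by (auto simp: eA_def qmul_ev_left qmul_CQ)
  show "{f \<in> CQ n. \<forall>s w. pend n s w \<noteq> v \<longrightarrow> f (s, w) = 0} \<subseteq> eA n v"
  proof
    fix f assume f: "f \<in> {f \<in> CQ n. \<forall>s w. pend n s w \<noteq> v \<longrightarrow> f (s, w) = 0}"
    then have "qmul n (ev v) f = f"
      by (auto simp: qmul_ev_left)
    with f show "f \<in> eA n v"
      unfolding eA_def by (intro CollectI exI[of _ f]) auto
  qed
qed

lemma eA_CQ: "b \<in> eA n v \<Longrightarrow> b \<in> CQ n"
  by (simp add: eA_eq)

lemma qmul_ev_eA: "b \<in> eA n v \<Longrightarrow> qmul n (ev v) b = b"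
  by (auto simp: eA_eq qmul_ev_left)

lemma ev_eA: "0 < n \<Longrightarrow> 0 \<le> v \<Longrightarrow> v < int n \<Longrightarrow> ev v \<in> eA n v"
  using ev_CQ[of v n] by (auto simp: eA_eq ev_def pend_def)

lemma qadd_eA: "b \<in> eA n v \<Longrightarrow> c \<in> eA n v \<Longrightarrow> qadd b c \<in> eA n v"
  using qadd_CQ[of b n c] by (auto simp: eA_eq qadd_def)

lemma qmul_right_eA:
  assumes "b \<in> eA n v" and "a \<in> CQ n"
  shows "qmul n b a \<in> eA n v"
proof -
  have "qmul n b a (s, w) = 0" if "pend n s w \<noteq> v" for s w
  proof -
    have b0: "\<And>s w. pend n s w \<noteq> v \<Longrightarrow> b (s, w) = 0"
      using assms(1) by (auto simp: eA_eq)
    have "b (pend n s (take k w), drop k w) = 0" for k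
      using b0 that by (metis append_take_drop_id pend_append)
    then show ?thesis
      by (simp add: qmul_def)
  qed
  with qmul_CQ[OF assms(2)] show ?thesis
    by (auto simp: eA_eq)
qed

lemma take_drop_eq_iff:
  assumes "k \<le> length w"
  shows "(take k w = w1 \<and> drop k w = w2) \<longleftrightarrow> (k = length w1 \<and> w = w1 @ w2)"
proof
  show "take k w = w1 \<and> drop k w = w2 \<Longrightarrow> k = length w1 \<and> w = w1 @ w2"
    using assms by auto
qed auto

lemma qmul_qmono:
  assumes "0 \<le> s" "s < int n"
  shows "qmul n (qmono t w2) (qmono s w1) = (if pend n s w1 = t then qmono s (w1 @ w2) else qzero)"
proof (rule ext, clarify)
  fix s' w
  have term_eq: "qmono s w1 (s', take k w) * qmono t w2 (pend n s' (take k w), drop k w) =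
     (if k = length w1 then (if s' = s \<and> w = w1 @ w2 \<and> pend n s w1 = t then 1 else 0) else 0)"
    if "k \<le> length w" for k
  proof (cases "take k w = w1 \<and> drop k w = w2")
    case True
    then show ?thesis
      using take_drop_eq_iff[OF that] unfolding qmono_def by auto
  next
    case False
    then show ?thesis
      using take_drop_eq_iff[OF that, of w1 w2] unfolding qmono_def by auto
  qed
  have "qmul n (qmono t w2) (qmono s w1) (s', w) =
     (\<Sum>k\<in>{0..length w}. if k = length w1 then (if s' = s \<and> w = w1 @ w2 \<and> pend n s w1 = t then 1 else 0) else 0)"
    unfolding qmul_def prod.case by (rule sum.cong) (auto simp: term_eq)
  then show "qmul n (qmono t w2) (qmono s w1) (s', w) =
      (if pend n s w1 = t then qmono s (w1 @ w2) else qzero) (s', w)"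
    by (auto simp: qmono_def qzero_def)
qed

lemma qmul_qscal_left: "0 < n \<Longrightarrow> qmul n (qscal n c) b = (\<lambda>p. c * b p)"
proof (rule ext, clarify)
  fix s w assume "0 < n"
  then have "qmul n (qscal n c) b (s, w) = (\<Sum>k\<in>{0..length w}. if k = length w then c * b (s, w) else 0)"
    unfolding qmul_def prod.case qscal_def using pend_range by (intro sum.cong) auto
  then show "qmul n (qscal n c) b (s, w) = c * b (s, w)"
    by simp
qed

lemma qmul_qscal_right: "b \<in> CQ n \<Longrightarrow> qmul n b (qscal n c) = (\<lambda>p. c * b p)"
proof (rule ext, clarify)
  fix s w assume "b \<in> CQ n"
  then have "qmul n b (qscal n c) (s, w) = (\<Sum>k\<in>{0..length w}. if k = 0 then c * b (s, w) else 0)"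
    unfolding qmul_def prod.case qscal_def by (intro sum.cong) (auto simp: pend_Nil CQ_def)
  then show "qmul n b (qscal n c) (s, w) = c * b (s, w)"
    by simp
qed

lemma qscal_central: "0 < n \<Longrightarrow> b \<in> CQ n \<Longrightarrow> qmul n b (qscal n c) = qmul n (qscal n c) b"
  by (simp add: qmul_qscal_left qmul_qscal_right)

lemma qmul_qone_left: "0 < n \<Longrightarrow> qmul n (qone n) f = f"
  by (simp add: qone_def qmul_qscal_left)

lemma qmul_qone_right: "f \<in> CQ n \<Longrightarrow> qmul n f (qone n) = f"
  by (simp add: qone_def qmul_qscal_right)

lemma rel1_Ibar:
  assumes "0 < n" "0 \<le> j" "j < int n"
  shows "rel1 j \<in> Ibar n m"
proof -
  have qone: "qone n \<in> CQ n"
    by (simp add: qone_def qscal_CQ)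
  have "qadd (qmul n (qone n) (qmul n (rel1 j) (qone n))) qzero \<in> relI n m"
    using assms qone by (intro relI_1 relI_zero)
  then have "rel1 j \<in> relI n m"
    using assms by (simp add: qadd_qzero qmul_qone_left qmul_qone_right rel1_CQ)
  then show ?thesis
    using assms by (auto simp: Ibar_def rel1_CQ)
qed

section \<open>The centre: elements of \<open>\<complex>[[t]]\<close> with \<open>t = xy\<close>\<close>

definition tword :: "nat \<Rightarrow> arr list" where
  "tword j = concat (replicate j [Y, X])"

lemma length_tword: "length (tword j) = 2 * j"
  by (induction j) (auto simp: tword_def)

lemma tword_add: "tword (i + j) = tword i @ tword j"
  by (simp add: tword_def replicate_add)

lemma tword_eq_Nil_iff: "tword j = [] \<longleftrightarrow> j = 0"
  by (cases j) (auto simp: tword_def)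

lemma tword_inj: "tword k = tword j \<longleftrightarrow> k = j"
  by (metis length_tword mult_left_cancel zero_neq_numeral)

lemma pend_tword: "0 \<le> s \<Longrightarrow> s < int n \<Longrightarrow> pend n s (tword j) = s"
proof -
  have "length (filter (\<lambda>a. a = X) (tword j)) = j" "length (filter (\<lambda>a. a = Y) (tword j)) = j"
    by (induction j) (auto simp: tword_def)
  then show "0 \<le> s \<Longrightarrow> s < int n \<Longrightarrow> pend n s (tword j) = s"
    by (simp add: pend_def)
qed

lemma zelt_tword: "zelt n z (s, tword j) = (if 0 \<le> s \<and> s < int n then fps_nth z j else 0)"
  by (simp add: zelt_def length_tword tword_def[symmetric])

lemma zelt_nonzeroD: "zelt n z (s, w) \<noteq> 0 \<Longrightarrow> 0 \<le> s \<and> s < int n \<and> (\<exists>j. w = tword j)"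
  by (auto simp: zelt_def tword_def split: if_splits)

lemma zelt_add: "zelt n (a + b) = qadd (zelt n a) (zelt n b)"
  by (auto simp: zelt_def qadd_def fun_eq_iff)

lemma zelt_const: "zelt n (fps_const c) = qscal n c"
proof (rule ext, clarify)
  fix s w
  show "zelt n (fps_const c) (s, w) = qscal n c (s, w)"
  proof (cases "\<exists>j. w = tword j")
    case True
    then obtain j where "w = tword j"
      by blast
    then show ?thesis
      by (cases j) (auto simp: zelt_tword qscal_def tword_eq_Nil_iff)
  next
    case False
    then have "w \<noteq> []"
      by (metis tword_eq_Nil_iff)
    then show ?thesis
      using zelt_nonzeroD[of n "fps_const c" s w] False by (auto simp: qscal_def)
  qed
qed

lemma sum_even_indices:
  fixes F :: "nat \<Rightarrow> 'a::comm_monoid_add"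
  assumes "\<And>k. odd k \<Longrightarrow> k \<le> 2 * K \<Longrightarrow> F k = 0"
  shows "(\<Sum>k\<in>{0..2 * K}. F k) = (\<Sum>j\<in>{0..K}. F (2 * j))"
  using assms
proof (induction K)
  case 0
  then show ?case by simp
next
  case (Suc K)
  have "{0..2 * Suc K} = insert (2 * K + 2) (insert (2 * K + 1) {0..2 * K})"
    by auto
  then have "(\<Sum>k\<in>{0..2 * Suc K}. F k) = F (2 * K + 2) + F (2 * K + 1) + (\<Sum>k\<in>{0..2 * K}. F k)"
    by (simp add: add.assoc)
  also have "F (2 * K + 1) = 0"
    using Suc.prems by simp
  also have "(\<Sum>k\<in>{0..2 * K}. F k) = (\<Sum>j\<in>{0..K}. F (2 * j))"
    using Suc by simp
  finally show ?case
    by (simp add: ac_simps)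
qed

lemma qmul_zelt_tword:
  assumes s: "0 \<le> s" "s < int n"
  shows "qmul n (zelt n a) (zelt n b) (s, tword K) = fps_nth (a * b) K"
proof -
  let ?F = "\<lambda>k. zelt n b (s, take k (tword K)) * zelt n a (pend n s (take k (tword K)), drop k (tword K))"
  have odd_term: "?F k = 0" if "odd k" "k \<le> 2 * K" for k
  proof -
    have "length (take k (tword K)) \<noteq> length (tword j)" for j
      using that by (auto simp: length_tword)
    then have "take k (tword K) \<noteq> tword j" for j
      by metis
    then show ?thesis
      using zelt_nonzeroD[of n b s "take k (tword K)"] by auto
  qed
  have even_term: "?F (2 * j) = fps_nth b j * fps_nth a (K - j)" if "j \<le> K" for j
  proof -
    have "tword K = tword j @ tword (K - j)"
      using that tword_add[of j "K - j"] by simp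
    then have "take (2 * j) (tword K) = tword j" "drop (2 * j) (tword K) = tword (K - j)"
      by (simp_all add: length_tword)
    then show ?thesis
      using s by (simp add: zelt_tword pend_tword)
  qed
  have "qmul n (zelt n a) (zelt n b) (s, tword K) = (\<Sum>k\<in>{0..2 * K}. ?F k)"
    by (simp add: qmul_def length_tword)
  also have "\<dots> = (\<Sum>j\<in>{0..K}. ?F (2 * j))"
    by (rule sum_even_indices) (rule odd_term)
  also have "\<dots> = (\<Sum>j\<in>{0..K}. fps_nth b j * fps_nth a (K - j))"
    by (rule sum.cong) (auto simp: even_term)
  also have "\<dots> = fps_nth (b * a) K"
    by (simp add: fps_mult_nth)
  finally show ?thesis
    by (simp add: mult.commute)
qed

lemma qmul_zelt_zero:
  assumes "\<not> ((\<exists>j. w = tword j) \<and> 0 \<le> s \<and> s < int n)"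
  shows "qmul n (zelt n a) (zelt n b) (s, w) = 0"
proof -
  have "zelt n b (s, take k w) * zelt n a (pend n s (take k w), drop k w) = 0" for k
  proof (rule ccontr)
    assume "\<not> ?thesis"
    then have "zelt n b (s, take k w) \<noteq> 0" "zelt n a (pend n s (take k w), drop k w) \<noteq> 0"
      by auto
    then obtain i j where "take k w = tword i" "drop k w = tword j" "0 \<le> s" "s < int n"
      using zelt_nonzeroD by blast
    moreover from this have "w = tword (i + j)"
      by (metis append_take_drop_id tword_add)
    ultimately show False
      using assms by blast
  qed
  then show ?thesis
    by (auto simp: qmul_def intro!: sum.neutral)
qed

lemma zelt_mult: "qmul n (zelt n a) (zelt n b) = zelt n (a * b)"
proof (rule ext, clarify)
  fix s w
  show "qmul n (zelt n a) (zelt n b) (s, w) = zelt n (a * b) (s, w)"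
  proof (cases "(\<exists>j. w = tword j) \<and> 0 \<le> s \<and> s < int n")
    case True
    then show ?thesis
      by (auto simp: qmul_zelt_tword zelt_tword)
  next
    case False
    then show ?thesis
      using qmul_zelt_zero zelt_nonzeroD by metis
  qed
qed

lemma zelt_ev_comm:
  assumes "0 \<le> v" "v < int n"
  shows "qmul n (zelt n z) (ev v) = qmul n (ev v) (zelt n z)"
proof (rule ext, clarify)
  fix s w
  have "qmul n (zelt n z) (ev v) (s, w) =
      (\<Sum>k\<in>{0..length w}. if k = 0 then (if s = v then zelt n z (v, w) else 0) else 0)"
    unfolding qmul_def prod.case ev_def using assms by (intro sum.cong) (auto simp: pend_Nil)
  also have "\<dots> = (if pend n s w = v then zelt n z (s, w) else 0)"
  proof (cases "zelt n z (s, w) = 0")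
    case False
    then obtain j where "0 \<le> s" "s < int n" "w = tword j"
      using zelt_nonzeroD by blast
    then show ?thesis
      by (simp add: pend_tword)
  qed auto
  finally show "qmul n (zelt n z) (ev v) (s, w) = qmul n (ev v) (zelt n z) (s, w)"
    by (simp add: qmul_ev_left)
qed

lemma zelt_eA:
  assumes "b \<in> eA n v"
  shows "qmul n (zelt n z) b \<in> eA n v"
proof -
  have "qmul n (zelt n z) b (s, w) = 0" if "pend n s w \<noteq> v" for s w
  proof -
    have "b (s, take k w) * zelt n z (pend n s (take k w), drop k w) = 0" for k
    proof (rule ccontr)
      assume "\<not> ?thesis"
      then have b: "b (s, take k w) \<noteq> 0" and "zelt n z (pend n s (take k w), drop k w) \<noteq> 0"
        by auto
      then obtain j where j: "drop k w = tword j" "0 \<le> pend n s (take k w)" "pend n s (take k w) < int n"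
        using zelt_nonzeroD by blast
      have "pend n s w = pend n (pend n s (take k w)) (drop k w)"
        by (metis append_take_drop_id pend_append)
      also have "\<dots> = pend n s (take k w)"
        using j by (simp add: pend_tword)
      finally show False
        using assms b that by (auto simp: eA_eq)
    qed
    then show ?thesis
      by (auto simp: qmul_def intro!: sum.neutral)
  qed
  then show ?thesis
    using assms by (auto simp: eA_eq qmul_CQ)
qed

lemma zelt_X_power_ev:
  assumes "0 \<le> j" "j < int n"
  shows "qmul n (zelt n (fps_X ^ d)) (ev j) = qmono j (tword d)"
proof (rule ext, clarify)
  fix s w
  have "qmul n (zelt n (fps_X ^ d)) (ev j) (s, w) = (if pend n s w = j then zelt n (fps_X ^ d) (s, w) else 0)"
    using zelt_ev_comm[OF assms] qmul_ev_left by metis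
  also have "\<dots> = qmono j (tword d) (s, w)"
  proof (cases "\<exists>k. w = tword k")
    case True
    then obtain k where "w = tword k"
      by blast
    then show ?thesis
      using assms by (cases "0 \<le> s \<and> s < int n") (auto simp: zelt_tword pend_tword qmono_def tword_inj)
  next
    case False
    then show ?thesis
      using zelt_nonzeroD[of n "fps_X ^ d" s w] by (auto simp: qmono_def)
  qed
  finally show "qmul n (zelt n (fps_X ^ d)) (ev j) (s, w) = qmono j (tword d) (s, w)" .
qed

locale amodule =
  fixes n m :: nat and K :: "('a, 'b) amod_scheme"
  assumes is_mod: "is_mod n m K" and n_pos: "0 < n"
begin

abbreviation "C \<equiv> mcar K"
abbreviation "add \<equiv> madd K"
abbreviation "zer \<equiv> mzero K"
abbreviation "act \<equiv> mact K"

lemma zero_closed [simp]: "zer \<in> C"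
  using is_mod unfolding is_mod_def by blast

lemma add_closed [simp]: "x \<in> C \<Longrightarrow> y \<in> C \<Longrightarrow> add x y \<in> C"
  using is_mod unfolding is_mod_def by auto

lemma act_closed [simp]: "a \<in> CQ n \<Longrightarrow> x \<in> C \<Longrightarrow> act a x \<in> C"
  using is_mod unfolding is_mod_def by auto

lemma add_assoc: "x \<in> C \<Longrightarrow> y \<in> C \<Longrightarrow> z \<in> C \<Longrightarrow> add (add x y) z = add x (add y z)"
  using is_mod unfolding is_mod_def by blast

lemma add_comm: "x \<in> C \<Longrightarrow> y \<in> C \<Longrightarrow> add x y = add y x"
  using is_mod unfolding is_mod_def by blast

lemma add_zero_left [simp]: "x \<in> C \<Longrightarrow> add zer x = x"
  using is_mod unfolding is_mod_def by blast

lemma add_zero_right [simp]: "x \<in> C \<Longrightarrow> add x zer = x"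
  by (metis add_comm add_zero_left zero_closed)

lemma add_inverse_ex: "x \<in> C \<Longrightarrow> \<exists>y\<in>C. add x y = zer"
  using is_mod unfolding is_mod_def by blast

lemma act_add: "a \<in> CQ n \<Longrightarrow> x \<in> C \<Longrightarrow> y \<in> C \<Longrightarrow> act a (add x y) = add (act a x) (act a y)"
  using is_mod unfolding is_mod_def by blast

lemma act_qadd: "a \<in> CQ n \<Longrightarrow> b \<in> CQ n \<Longrightarrow> x \<in> C \<Longrightarrow> act (qadd a b) x = add (act a x) (act b x)"
  using is_mod unfolding is_mod_def by blast

lemma act_qmul: "a \<in> CQ n \<Longrightarrow> b \<in> CQ n \<Longrightarrow> x \<in> C \<Longrightarrow> act (qmul n a b) x = act a (act b x)"
  using is_mod unfolding is_mod_def by blast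

lemma act_qone: "x \<in> C \<Longrightarrow> act (qone n) x = x"
  using is_mod unfolding is_mod_def by blast

lemma act_Ibar: "a \<in> Ibar n m \<Longrightarrow> x \<in> C \<Longrightarrow> act a x = zer"
  using is_mod unfolding is_mod_def by blast

lemma add_left_comm: "x \<in> C \<Longrightarrow> y \<in> C \<Longrightarrow> z \<in> C \<Longrightarrow> add x (add y z) = add y (add x z)"
  by (metis add_assoc add_comm)

lemma add_add_swap:
  "w \<in> C \<Longrightarrow> x \<in> C \<Longrightarrow> y \<in> C \<Longrightarrow> z \<in> C \<Longrightarrow> add (add w x) (add y z) = add (add w y) (add x z)"
  by (metis add_assoc add_closed add_left_comm)

lemma add_left_cancel:
  assumes "x \<in> C" "y \<in> C" "z \<in> C" "add x y = add x z"
  shows "y = z"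
proof -
  obtain x' where x': "x' \<in> C" "add x x' = zer"
    using add_inverse_ex assms(1) by blast
  have "y = add (add x' x) y"
    using x' assms by (simp add: add_comm)
  also have "\<dots> = add (add x' x) z"
    using x' assms by (simp add: add_assoc)
  also have "\<dots> = z"
    using x' assms by (simp add: add_comm)
  finally show ?thesis .
qed

lemma add_eq_self_imp_zero: "x \<in> C \<Longrightarrow> y \<in> C \<Longrightarrow> add x y = x \<Longrightarrow> y = zer"
  using add_left_cancel[of x y zer] by simp

lemma act_zero [simp]: "a \<in> CQ n \<Longrightarrow> act a zer = zer"
  using add_eq_self_imp_zero[of "act a zer" "act a zer"] act_add[of a zer zer] by simp

lemma act_zelt_add: "x \<in> C \<Longrightarrow> act (zelt n (a + b)) x = add (act (zelt n a) x) (act (zelt n b) x)"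
  by (simp add: zelt_add act_qadd zelt_CQ)

lemma act_zelt_mult: "x \<in> C \<Longrightarrow> act (zelt n a) (act (zelt n b) x) = act (zelt n (a * b)) x"
  by (simp add: zelt_mult act_qmul[symmetric] zelt_CQ)

lemma act_zelt_zero [simp]:
  assumes "x \<in> C"
  shows "act (zelt n 0) x = zer"
proof -
  have "add (act (zelt n 0) x) (act (zelt n 0) x) = act (zelt n 0) x"
    using act_zelt_add[OF assms, of 0 0] by simp
  then show ?thesis
    using assms add_eq_self_imp_zero zelt_CQ act_closed by blast
qed

definition zcomb :: "complex fps list \<Rightarrow> 'a list \<Rightarrow> 'a" where
  "zcomb zs ls = msum K (map2 (\<lambda>z b. act (zelt n z) b) zs ls)"

lemma zcomb_Nil [simp]: "zcomb [] ls = zer" "zcomb zs [] = zer"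
  by (simp_all add: zcomb_def msum_def)

lemma zcomb_Cons [simp]: "zcomb (z # zs) (l # ls) = add (act (zelt n z) l) (zcomb zs ls)"
  by (simp add: zcomb_def msum_def)

lemma zcomb_closed [simp]: "set ls \<subseteq> C \<Longrightarrow> zcomb zs ls \<in> C"
proof (induction ls arbitrary: zs)
  case (Cons l ls)
  then show ?case
    by (cases zs) (auto simp: zelt_CQ)
qed simp

lemma zcomb_add:
  "set ls \<subseteq> C \<Longrightarrow> length zs = length ls \<Longrightarrow> length zs' = length ls \<Longrightarrow>
    zcomb (map2 (+) zs zs') ls = add (zcomb zs ls) (zcomb zs' ls)"
proof (induction ls arbitrary: zs zs')
  case (Cons l ls)
  then obtain z zr z' zr' where zs: "zs = z # zr" "zs' = z' # zr'"
    by (metis length_Suc_conv)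
  have "set ls \<subseteq> C" "l \<in> C"
    using Cons.prems by auto
  then have "zcomb (map2 (+) zs zs') (l # ls) =
      add (add (act (zelt n z) l) (act (zelt n z') l)) (add (zcomb zr ls) (zcomb zr' ls))"
    using Cons zs by (simp add: act_zelt_add)
  also have "\<dots> = add (add (act (zelt n z) l) (zcomb zr ls)) (add (act (zelt n z') l) (zcomb zr' ls))"
    using \<open>set ls \<subseteq> C\<close> \<open>l \<in> C\<close> by (intro add_add_swap) (simp_all add: zelt_CQ)
  finally show ?case
    using zs by simp
qed simp

lemma zcomb_scale: "set ls \<subseteq> C \<Longrightarrow> zcomb (map (\<lambda>z. c * z) zs) ls = act (zelt n c) (zcomb zs ls)"
proof (induction ls arbitrary: zs)
  case (Cons l ls)
  then show ?case
    by (cases zs) (auto simp: zelt_CQ act_add act_zelt_mult)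
qed (simp add: zelt_CQ)

lemma zcomb_zeros: "set ls \<subseteq> C \<Longrightarrow> (\<forall>z\<in>set zs. z = 0) \<Longrightarrow> zcomb zs ls = zer"
proof (induction ls arbitrary: zs)
  case (Cons l ls)
  then show ?case
    by (cases zs) auto
qed simp

end

lemma hom_zero:
  assumes "amodule n m K" "amodule n m K'" "f \<in> hom n K K'"
  shows "f (mzero K) = mzero K'"
proof -
  interpret K: amodule n m K by fact
  interpret K': amodule n m K' by fact
  have "\<forall>x\<in>K.C. \<forall>y\<in>K.C. f (K.add x y) = K'.add (f x) (f y)"
    using assms(3) unfolding hom_def by blast
  then have "f (K.add K.zer K.zer) = K'.add (f K.zer) (f K.zer)"
    using K.zero_closed by blast
  moreover have "f K.zer \<in> K'.C"
    using assms(3) unfolding hom_def by auto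
  ultimately show ?thesis
    using K'.add_eq_self_imp_zero[of "f K.zer" "f K.zer"] by simp
qed

lemma hom_zcomb:
  assumes "amodule n m K" "amodule n m K'" "f \<in> hom n K K'" "set ls \<subseteq> mcar K"
  shows "f (amodule.zcomb n K zs ls) = amodule.zcomb n K' zs (map f ls)"
proof -
  interpret K: amodule n m K by fact
  interpret K': amodule n m K' by fact
  have add: "\<forall>x\<in>K.C. \<forall>y\<in>K.C. f (K.add x y) = K'.add (f x) (f y)"
    and act: "\<forall>a\<in>CQ n. \<forall>x\<in>K.C. f (K.act a x) = K'.act a (f x)"
    using assms(3) by (auto simp: hom_def)
  show ?thesis
    using assms(4)
  proof (induction ls arbitrary: zs)
    case Nil
    then show ?case
      using hom_zero[OF assms(1-3)] by simp
  next
    case (Cons l ls)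
    show ?case
    proof (cases zs)
      case Nil
      then show ?thesis
        using hom_zero[OF assms(1-3)] by simp
    next
      case (Cons z zr)
      with \<open>set (l # ls) \<subseteq> K.C\<close> show ?thesis
        using Cons.IH add act by (simp add: zelt_CQ)
    qed
  qed
qed

section \<open>Faithfulness of \<open>e\<^sub>v A\<close> on \<open>Z\<close>-free modules\<close>

definition vertex_sum :: "nat \<Rightarrow> qel" where
  "vertex_sum k = (\<lambda>(s, w). if w = [] \<and> 0 \<le> s \<and> s < int k then 1 else 0)"

lemma vertex_sum_CQ: "k \<le> n \<Longrightarrow> vertex_sum k \<in> CQ n"
  by (auto simp: vertex_sum_def CQ_def)

lemma vertex_sum_0: "vertex_sum 0 = zelt n 0"
  by (auto simp: vertex_sum_def zelt_def fun_eq_iff)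

lemma vertex_sum_Suc: "vertex_sum (Suc k) = qadd (vertex_sum k) (ev (int k))"
  by (auto simp: vertex_sum_def qadd_def ev_def fun_eq_iff)

lemma vertex_sum_n: "vertex_sum n = qone n"
  by (auto simp: vertex_sum_def qone_def qscal_def fun_eq_iff)

context amodule
begin

lemma act_qmono_append:
  assumes "0 \<le> s" "s < int n" "x \<in> C"
  shows "act (qmono s (u @ w)) x = act (qmono (pend n s u) w) (act (qmono s u) x)"
proof -
  have "qmul n (qmono (pend n s u) w) (qmono s u) = qmono s (u @ w)"
    using qmul_qmono[OF assms(1,2)] by simp
  moreover have "qmono (pend n s u) w \<in> CQ n"
    using pend_range[OF n_pos] by (intro qmono_CQ) auto
  ultimately show ?thesis
    using act_qmul qmono_CQ assms by metis
qed

definition word_equiv :: "arr list \<Rightarrow> arr list \<Rightarrow> bool" where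
  "word_equiv w w' \<longleftrightarrow> (\<forall>s. pend n s w = pend n s w') \<and>
     (\<forall>s x. 0 \<le> s \<and> s < int n \<and> x \<in> C \<longrightarrow> act (qmono s w) x = act (qmono s w') x)"

lemma word_equiv_trans: "word_equiv w w' \<Longrightarrow> word_equiv w' w'' \<Longrightarrow> word_equiv w w''"
  by (simp add: word_equiv_def)

lemma word_equiv_append_cong:
  assumes "word_equiv w w'"
  shows "word_equiv (u @ w @ u') (u @ w' @ u')"
proof -
  have "act (qmono s (u @ w @ u')) x = act (qmono s (u @ w' @ u')) x"
    if s: "0 \<le> s" "s < int n" and x: "x \<in> C" for s x
  proof -
    let ?p = "pend n s u"
    have p: "0 \<le> ?p" "?p < int n"
      using pend_range[OF n_pos] by auto
    have y: "act (qmono s u) x \<in> C"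
      using s x by (simp add: qmono_CQ)
    have "act (qmono s (u @ w @ u')) x = act (qmono (pend n ?p w) u') (act (qmono ?p w) (act (qmono s u) x))"
      using act_qmono_append[OF s x, of u "w @ u'"] act_qmono_append[OF p y, of w u'] by simp
    also have "\<dots> = act (qmono (pend n ?p w') u') (act (qmono ?p w') (act (qmono s u) x))"
      using assms p y by (simp add: word_equiv_def)
    also have "\<dots> = act (qmono s (u @ w' @ u')) x"
      using act_qmono_append[OF s x, of u "w' @ u'"] act_qmono_append[OF p y, of w' u'] by simp
    finally show ?thesis .
  qed
  moreover have "pend n s (u @ w @ u') = pend n s (u @ w' @ u')" for s
    using assms by (simp add: word_equiv_def pend_append)
  ultimately show ?thesis
    by (simp add: word_equiv_def)
qed

lemma word_equiv_XY_YX: "word_equiv [X, Y] [Y, X]"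
proof -
  have "act (qmono s [X, Y]) x = act (qmono s [Y, X]) x" if "0 \<le> s" "s < int n" "x \<in> C" for s x
  proof -
    have "qmono s [Y, X] = qadd (rel1 s) (qmono s [X, Y])"
      by (auto simp: qmono_def rel1_def qadd_def fun_eq_iff)
    then have "act (qmono s [Y, X]) x = add (act (rel1 s) x) (act (qmono s [X, Y]) x)"
      using that by (simp add: act_qadd rel1_CQ qmono_CQ)
    also have "act (rel1 s) x = zer"
      using rel1_Ibar[OF n_pos that(1,2)] that(3) by (rule act_Ibar)
    finally show ?thesis
      using that by (simp add: qmono_CQ)
  qed
  then show ?thesis
    by (simp add: word_equiv_def pend_def algebra_simps)
qed

lemma word_equiv_X_power_Y: "word_equiv (replicate a X @ [Y]) ([Y] @ replicate a X)"
proof (induction a)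
  case 0
  then show ?case
    by (simp add: word_equiv_def)
next
  case (Suc a)
  have "word_equiv (replicate a X @ [X, Y] @ []) (replicate a X @ [Y, X] @ [])"
    by (rule word_equiv_append_cong[OF word_equiv_XY_YX])
  moreover have "word_equiv ([] @ (replicate a X @ [Y]) @ [X]) ([] @ ([Y] @ replicate a X) @ [X])"
    by (rule word_equiv_append_cong[OF Suc])
  ultimately have "word_equiv (replicate a X @ [X, Y]) ([Y] @ replicate a X @ [X])"
    by (auto intro: word_equiv_trans)
  then show ?case
    by (simp add: replicate_append_same[symmetric])
qed

lemma word_equiv_tword: "word_equiv (replicate d X @ replicate d Y) (tword d)"
proof (induction d)
  case 0
  then show ?case
    by (simp add: word_equiv_def tword_def)
next
  case (Suc d)
  have "word_equiv ([] @ (replicate (Suc d) X @ [Y]) @ replicate d Y) ([] @ ([Y] @ replicate (Suc d) X) @ replicate d Y)"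
    by (rule word_equiv_append_cong[OF word_equiv_X_power_Y])
  moreover have "word_equiv ([Y, X] @ (replicate d X @ replicate d Y) @ []) ([Y, X] @ tword d @ [])"
    by (rule word_equiv_append_cong[OF Suc])
  ultimately have "word_equiv (replicate (Suc d) X @ [Y] @ replicate d Y) ([Y, X] @ tword d)"
    by (auto intro: word_equiv_trans)
  then show ?case
    by (simp add: tword_def)
qed

text \<open>\<open>t\<^sup>d e\<^sub>j = y\<^sup>d x\<^sup>d e\<^sub>j\<close>, and \<open>x\<^sup>d e\<^sub>j \<in> e\<^sub>v A\<close> once \<open>d \<equiv> v - j (mod n)\<close>;
  so on a \<open>Z\<close>-free module an element killed by \<open>e\<^sub>v A\<close> is killed by every \<open>e\<^sub>j\<close>.\<close>

lemma act_t_power_ev: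
  assumes j: "0 \<le> j" "j < int n" and v: "0 \<le> v" "v < int n" and y: "y \<in> C"
  obtains d b where "b \<in> eA n v" "act (zelt n (fps_X ^ d)) (act (ev j) y) = act (qmono v (replicate d Y)) (act b y)"
proof -
  define d where "d = nat ((v - j) mod int n)"
  have pd: "pend n j (replicate d X) = v"
    using n_pos v j by (simp add: pend_def d_def mod_add_right_eq)
  have b: "qmono j (replicate d X) \<in> eA n v"
    using pd j qmono_CQ[OF j] by (auto simp: eA_eq qmono_def)
  have "act (zelt n (fps_X ^ d)) (act (ev j) y) = act (qmul n (zelt n (fps_X ^ d)) (ev j)) y"
    using act_qmul[OF zelt_CQ ev_CQ[OF j] y] by simp
  also have "\<dots> = act (qmono j (replicate d X @ replicate d Y)) y"
    using word_equiv_tword[of d] j y by (simp add: zelt_X_power_ev[OF j] word_equiv_def)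
  also have "\<dots> = act (qmono v (replicate d Y)) (act (qmono j (replicate d X)) y)"
    using act_qmono_append[OF j y] pd by simp
  finally show ?thesis
    using b that by blast
qed

lemma Z_free_act_t_power_eq_zero:
  assumes zf: "Z_free n K" and u: "u \<in> C" and t: "act (zelt n (fps_X ^ d)) u = zer"
  shows "u = zer"
proof -
  obtain bs where bs: "set bs \<subseteq> C" "\<forall>x\<in>C. \<exists>zs. length zs = length bs \<and> x = zcomb zs bs"
    "\<forall>zs. length zs = length bs \<and> zcomb zs bs = zer \<longrightarrow> (\<forall>z\<in>set zs. z = 0)"
    using zf unfolding Z_free_def zcomb_def by blast
  obtain zs where zs: "length zs = length bs" "u = zcomb zs bs"
    using bs(2) u by blast
  have "zcomb (map (\<lambda>z. fps_X ^ d * z) zs) bs = zer"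
    using zcomb_scale[OF bs(1)] t zs by simp
  then have "\<forall>z\<in>set zs. z = 0"
    using bs(3)[rule_format, of "map (\<lambda>z. fps_X ^ d * z) zs"] zs(1) by fastforce
  then show ?thesis
    using zs zcomb_zeros[OF bs(1)] by simp
qed

lemma act_ev_all_zero:
  assumes y: "y \<in> C" and ev: "\<And>j. 0 \<le> j \<Longrightarrow> j < int n \<Longrightarrow> act (ev j) y = zer"
  shows "y = zer"
proof -
  have "k \<le> n \<Longrightarrow> act (vertex_sum k) y = zer" for k
  proof (induction k)
    case 0
    then show ?case
      using y by (simp add: vertex_sum_0[of n])
  next
    case (Suc k)
    then have "act (vertex_sum (Suc k)) y = add (act (vertex_sum k) y) (act (ev (int k)) y)"
      unfolding vertex_sum_Suc using y by (intro act_qadd vertex_sum_CQ ev_CQ) auto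
    with Suc ev[of "int k"] show ?case
      by simp
  qed
  then have "act (qone n) y = zer"
    by (metis vertex_sum_n order_refl)
  then show ?thesis
    using act_qone[OF y] by simp
qed

lemma eA_annihilator_trivial:
  assumes zf: "Z_free n K" and v: "0 \<le> v" "v < int n" and y: "y \<in> C"
    and kill: "\<forall>b\<in>eA n v. act b y = zer"
  shows "y = zer"
proof (rule act_ev_all_zero[OF y])
  fix j assume j: "0 \<le> j" "j < int n"
  obtain d b where "b \<in> eA n v" and t: "act (zelt n (fps_X ^ d)) (act (ev j) y) = act (qmono v (replicate d Y)) (act b y)"
    using act_t_power_ev[OF j v y] .
  with kill v have "act (zelt n (fps_X ^ d)) (act (ev j) y) = zer"
    by (simp add: qmono_CQ)
  then show "act (ev j) y = zer"
    using Z_free_act_t_power_eq_zero[OF zf] y j by (simp add: ev_CQ)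
qed

end

section \<open>The module \<open>J\<^sub>v\<close> and the quotient \<open>\<omega>\<close>\<close>

locale vertex_module = amodule n m K for n m :: nat and K :: "('a, 'b) amod_scheme" +
  fixes v :: int
  assumes v_nonneg: "0 \<le> v" and v_less: "v < int n"
begin

abbreviation "eAv \<equiv> eA n v"
abbreviation "JC \<equiv> mcar (Jmod n m v K)"
abbreviation "Jadd \<equiv> madd (Jmod n m v K)"
abbreviation "Jzero \<equiv> mzero (Jmod n m v K)"
abbreviation "Jact \<equiv> mact (Jmod n m v K)"
abbreviation "uJ \<equiv> unitJ n v K"
abbreviation "unit_range \<equiv> unitJ n v K ` mcar K"
abbreviation "omega_class \<equiv> coset (Jmod n m v K) (unitJ n v K ` mcar K)"
abbreviation "Om \<equiv> omega n m v K"

lemma ev_v_CQ: "ev v \<in> CQ n"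
  using ev_CQ v_nonneg v_less by blast

lemma ev_v_eA: "ev v \<in> eAv"
  using ev_eA n_pos v_nonneg v_less by blast

lemma eV_subset: "eV K v \<subseteq> C"
  using ev_v_CQ by (auto simp: eV_def)

lemma eV_zero: "zer \<in> eV K v"
  using ev_v_CQ by (auto simp: eV_def intro!: image_eqI[of _ _ zer])

lemma eV_add: "x \<in> eV K v \<Longrightarrow> y \<in> eV K v \<Longrightarrow> add x y \<in> eV K v"
  using ev_v_CQ by (auto simp: eV_def act_add[symmetric])

lemma act_eA_eV:
  assumes b: "b \<in> eAv" and x: "x \<in> C"
  shows "act b x \<in> eV K v"
proof -
  have "act b x = act (qmul n (ev v) b) x"
    using qmul_ev_eA[OF b] by simp
  also have "\<dots> = act (ev v) (act b x)"
    using b x ev_v_CQ by (simp add: act_qmul eA_CQ)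
  finally show ?thesis
    using b x by (auto simp: eV_def eA_CQ)
qed

lemma act_ev_eV:
  assumes "x \<in> eV K v"
  shows "act (ev v) x = x"
proof -
  obtain x' where x': "x' \<in> C" "x = act (ev v) x'"
    using assms by (auto simp: eV_def)
  have "qmul n (ev v) (ev v) = ev v"
    using ev_v_eA qmul_ev_eA by blast
  then show ?thesis
    using x' ev_v_CQ by (metis act_qmul)
qed

lemma ev_zelt_comm: "x \<in> C \<Longrightarrow> act (ev v) (act (zelt n z) x) = act (zelt n z) (act (ev v) x)"
  by (metis act_qmul zelt_CQ ev_v_CQ zelt_ev_comm[OF v_nonneg v_less])

lemma eV_zelt:
  assumes "x \<in> eV K v"
  shows "act (zelt n z) x \<in> eV K v"
proof -
  obtain x' where x': "x' \<in> C" "x = act (ev v) x'"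
    using assms by (auto simp: eV_def)
  then have "act (zelt n z) x = act (ev v) (act (zelt n z) x')"
    by (simp add: ev_zelt_comm)
  then show ?thesis
    using x' by (auto simp: eV_def zelt_CQ)
qed

lemma Jadd_eq: "Jadd \<phi> \<psi> = restrict (\<lambda>b. add (\<phi> b) (\<psi> b)) eAv"
  by (simp add: Jmod_def)

lemma Jzero_eq: "Jzero = restrict (\<lambda>b. zer) eAv"
  by (simp add: Jmod_def)

lemma Jact_eq: "Jact a \<phi> = restrict (\<lambda>b. \<phi> (qmul n b a)) eAv"
  by (simp add: Jmod_def)

lemma uJ_eq: "uJ y = restrict (\<lambda>b. act b y) eAv"
  by (simp add: unitJ_def)

lemma JC_eq: "JC = {\<phi>. \<phi> \<in> extensional eAv \<and> \<phi> ` eAv \<subseteq> eV K v \<and>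
    (\<forall>b\<in>eAv. \<forall>c\<in>eAv. \<phi> (qadd b c) = add (\<phi> b) (\<phi> c)) \<and>
    (\<forall>z. \<forall>b\<in>eAv. \<phi> (qmul n (zelt n z) b) = act (zelt n z) (\<phi> b)) \<and>
    (\<forall>b\<in>eAv \<inter> Ibar n m. \<phi> b = zer)}"
  by (simp add: Jmod_def)

text \<open>
  Identities in \<open>J\<^sub>v\<close> are proved pointwise, in the larger set of all \<open>K\<close>-valued maps on \<open>e\<^sub>v A\<close>,
  which is closed under the operations of \<^const>\<open>Jmod\<close>.\<close>

definition eA_maps :: "(qel \<Rightarrow> 'a) set" where
  "eA_maps = {\<phi>. \<phi> \<in> extensional eAv \<and> \<phi> ` eAv \<subseteq> C}"

lemma JC_eA_maps: "JC \<subseteq> eA_maps"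
  using eV_subset by (auto simp: JC_eq eA_maps_def)

lemma eA_maps_eqI: "\<phi> \<in> eA_maps \<Longrightarrow> \<psi> \<in> eA_maps \<Longrightarrow> (\<And>b. b \<in> eAv \<Longrightarrow> \<phi> b = \<psi> b) \<Longrightarrow> \<phi> = \<psi>"
  by (auto simp: eA_maps_def intro: extensionalityI)

lemma eA_maps_val: "\<phi> \<in> eA_maps \<Longrightarrow> b \<in> eAv \<Longrightarrow> \<phi> b \<in> C"
  by (auto simp: eA_maps_def)

lemma Jadd_eA_maps: "\<phi> \<in> eA_maps \<Longrightarrow> \<psi> \<in> eA_maps \<Longrightarrow> Jadd \<phi> \<psi> \<in> eA_maps"
  unfolding eA_maps_def Jadd_eq by (auto intro!: add_closed)

lemma Jzero_eA_maps: "Jzero \<in> eA_maps"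
  by (auto simp: eA_maps_def Jzero_eq)

lemma uJ_eA_maps: "y \<in> C \<Longrightarrow> uJ y \<in> eA_maps"
  by (auto simp: eA_maps_def uJ_eq eA_CQ)

lemma Jact_eA_maps: "a \<in> CQ n \<Longrightarrow> \<phi> \<in> eA_maps \<Longrightarrow> Jact a \<phi> \<in> eA_maps"
  by (auto simp: eA_maps_def Jact_eq qmul_right_eA)

lemma Jadd_assoc:
  "\<phi> \<in> eA_maps \<Longrightarrow> \<psi> \<in> eA_maps \<Longrightarrow> \<chi> \<in> eA_maps \<Longrightarrow> Jadd (Jadd \<phi> \<psi>) \<chi> = Jadd \<phi> (Jadd \<psi> \<chi>)"
  by (intro eA_maps_eqI Jadd_eA_maps) (auto simp: Jadd_eq eA_maps_val add_assoc)

lemma Jadd_comm: "\<phi> \<in> eA_maps \<Longrightarrow> \<psi> \<in> eA_maps \<Longrightarrow> Jadd \<phi> \<psi> = Jadd \<psi> \<phi>"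
  by (intro eA_maps_eqI Jadd_eA_maps) (auto simp: Jadd_eq eA_maps_val add_comm)

lemma Jadd_zero_left: "\<phi> \<in> eA_maps \<Longrightarrow> Jadd Jzero \<phi> = \<phi>"
  by (intro eA_maps_eqI Jadd_eA_maps Jzero_eA_maps) (auto simp: Jadd_eq Jzero_eq eA_maps_val)

lemma Jadd_zero_right: "\<phi> \<in> eA_maps \<Longrightarrow> Jadd \<phi> Jzero = \<phi>"
  by (intro eA_maps_eqI Jadd_eA_maps Jzero_eA_maps) (auto simp: Jadd_eq Jzero_eq eA_maps_val)

lemma Jadd_Jadd_swap:
  "\<phi> \<in> eA_maps \<Longrightarrow> \<psi> \<in> eA_maps \<Longrightarrow> \<chi> \<in> eA_maps \<Longrightarrow> \<xi> \<in> eA_maps \<Longrightarrow>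
    Jadd (Jadd \<phi> \<psi>) (Jadd \<chi> \<xi>) = Jadd (Jadd \<phi> \<chi>) (Jadd \<psi> \<xi>)"
  by (metis Jadd_assoc Jadd_comm Jadd_eA_maps)

lemma uJ_add: "x \<in> C \<Longrightarrow> y \<in> C \<Longrightarrow> uJ (add x y) = Jadd (uJ x) (uJ y)"
  by (intro eA_maps_eqI Jadd_eA_maps uJ_eA_maps add_closed) (auto simp: Jadd_eq uJ_eq act_add eA_CQ)

lemma uJ_zero: "uJ zer = Jzero"
  by (intro eA_maps_eqI uJ_eA_maps Jzero_eA_maps zero_closed) (auto simp: uJ_eq Jzero_eq eA_CQ)

lemma Jact_Jadd:
  "a \<in> CQ n \<Longrightarrow> \<phi> \<in> eA_maps \<Longrightarrow> \<psi> \<in> eA_maps \<Longrightarrow> Jact a (Jadd \<phi> \<psi>) = Jadd (Jact a \<phi>) (Jact a \<psi>)"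
  by (intro eA_maps_eqI Jadd_eA_maps Jact_eA_maps) (auto simp: Jadd_eq Jact_eq qmul_right_eA)

lemma Jact_uJ: "a \<in> CQ n \<Longrightarrow> y \<in> C \<Longrightarrow> Jact a (uJ y) = uJ (act a y)"
  by (intro eA_maps_eqI Jact_eA_maps uJ_eA_maps act_closed)
    (auto simp: Jact_eq uJ_eq qmul_right_eA act_qmul eA_CQ)

lemma uJ_JC:
  assumes "y \<in> C"
  shows "uJ y \<in> JC"
  unfolding JC_eq
proof (intro CollectI conjI ballI allI)
  show "uJ y \<in> extensional eAv"
    by (simp add: uJ_eq)
  show "uJ y ` eAv \<subseteq> eV K v"
    using assms act_eA_eV by (auto simp: uJ_eq)
  fix b assume b: "b \<in> eAv"
  show "uJ y (qadd b c) = add (uJ y b) (uJ y c)" if "c \<in> eAv" for c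
    using b that assms by (simp add: uJ_eq qadd_eA act_qadd eA_CQ)
  show "uJ y (qmul n (zelt n z) b) = act (zelt n z) (uJ y b)" for z
    using b assms by (simp add: uJ_eq zelt_eA act_qmul zelt_CQ eA_CQ)
next
  fix b assume "b \<in> eAv \<inter> Ibar n m"
  then show "uJ y b = zer"
    using assms by (simp add: uJ_eq act_Ibar)
qed

lemma Jadd_JC:
  assumes "\<phi> \<in> JC" "\<psi> \<in> JC"
  shows "Jadd \<phi> \<psi> \<in> JC"
proof -
  have \<phi>: "\<phi> ` eAv \<subseteq> eV K v" "\<forall>b\<in>eAv. \<forall>c\<in>eAv. \<phi> (qadd b c) = add (\<phi> b) (\<phi> c)"
      "\<forall>z. \<forall>b\<in>eAv. \<phi> (qmul n (zelt n z) b) = act (zelt n z) (\<phi> b)" "\<forall>b\<in>eAv \<inter> Ibar n m. \<phi> b = zer"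
    and \<psi>: "\<psi> ` eAv \<subseteq> eV K v" "\<forall>b\<in>eAv. \<forall>c\<in>eAv. \<psi> (qadd b c) = add (\<psi> b) (\<psi> c)"
      "\<forall>z. \<forall>b\<in>eAv. \<psi> (qmul n (zelt n z) b) = act (zelt n z) (\<psi> b)" "\<forall>b\<in>eAv \<inter> Ibar n m. \<psi> b = zer"
    using assms unfolding JC_eq by blast+
  have val: "\<phi> b \<in> C" "\<psi> b \<in> C" if "b \<in> eAv" for b
    using \<phi>(1) \<psi>(1) eV_subset that by auto
  show ?thesis
    unfolding JC_eq
  proof (intro CollectI conjI ballI allI)
    show "Jadd \<phi> \<psi> \<in> extensional eAv"
      by (simp add: Jadd_eq)
    show "Jadd \<phi> \<psi> ` eAv \<subseteq> eV K v"
      using \<phi>(1) \<psi>(1) eV_add by (auto simp: Jadd_eq)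
    fix b assume b: "b \<in> eAv"
    show "Jadd \<phi> \<psi> (qadd b c) = add (Jadd \<phi> \<psi> b) (Jadd \<phi> \<psi> c)" if c: "c \<in> eAv" for c
      using b c \<phi>(2) \<psi>(2) add_add_swap[OF val(1)[OF b] val(1)[OF c] val(2)[OF b] val(2)[OF c]]
      by (simp add: Jadd_eq qadd_eA)
    show "Jadd \<phi> \<psi> (qmul n (zelt n z) b) = act (zelt n z) (Jadd \<phi> \<psi> b)" for z
      using b \<phi>(3) \<psi>(3) val by (simp add: Jadd_eq zelt_eA act_add zelt_CQ)
  next
    fix b assume "b \<in> eAv \<inter> Ibar n m"
    then show "Jadd \<phi> \<psi> b = zer"
      using \<phi>(4) \<psi>(4) by (simp add: Jadd_eq)
  qed
qed

lemma unitJ_inj: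
  assumes zf: "Z_free n K" and x: "x \<in> C" and y: "y \<in> C" and e: "uJ x = uJ y"
  shows "x = y"
proof -
  obtain y' where y': "y' \<in> C" "add y y' = zer"
    using add_inverse_ex y by blast
  have "act b (add x y') = zer" if b: "b \<in> eAv" for b
  proof -
    have "act b x = act b y"
      using fun_cong[OF e, of b] b by (simp add: uJ_eq)
    then have "act b (add x y') = act b (add y y')"
      using act_add[OF eA_CQ[OF b] x y'(1)] act_add[OF eA_CQ[OF b] y y'(1)] by simp
    then show ?thesis
      using b y' by (simp add: eA_CQ)
  qed
  then have z: "add x y' = zer"
    using eA_annihilator_trivial[OF zf v_nonneg v_less] x y' by simp
  have "x = add x (add y' y)"
    using y y' x by (simp add: add_comm)
  also have "\<dots> = add (add x y') y"
    using x y y' by (simp add: add_assoc)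
  finally show ?thesis
    using z y by simp
qed

lemma unit_range_add: "s \<in> unit_range \<Longrightarrow> t \<in> unit_range \<Longrightarrow> Jadd s t \<in> unit_range"
  by (auto simp: uJ_add[symmetric])

lemma unit_range_inverse_ex:
  assumes "s \<in> unit_range"
  shows "\<exists>t\<in>unit_range. Jadd s t = Jzero"
proof -
  obtain y where y: "y \<in> C" "s = uJ y"
    using assms by blast
  obtain y' where y': "y' \<in> C" "add y y' = zer"
    using add_inverse_ex y(1) by blast
  have "Jadd s (uJ y') = Jzero"
    using y y' uJ_add uJ_zero by metis
  then show ?thesis
    using y' by blast
qed

lemma omega_class_self:
  assumes "\<phi> \<in> eA_maps"
  shows "\<phi> \<in> omega_class \<phi>"
proof -
  have "\<phi> = Jadd \<phi> (uJ zer)"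
    using Jadd_zero_right[OF assms] uJ_zero by simp
  moreover have "uJ zer \<in> unit_range"
    by simp
  ultimately show ?thesis
    unfolding coset_def by blast
qed

lemma omega_class_add_unit:
  assumes \<phi>: "\<phi> \<in> eA_maps" and s: "s \<in> unit_range"
  shows "omega_class (Jadd \<phi> s) = omega_class \<phi>"
proof
  have s_maps: "s \<in> eA_maps"
    using s uJ_eA_maps by auto
  show "omega_class (Jadd \<phi> s) \<subseteq> omega_class \<phi>"
  proof
    fix x assume "x \<in> omega_class (Jadd \<phi> s)"
    then obtain t where t: "t \<in> unit_range" "x = Jadd (Jadd \<phi> s) t"
      by (auto simp: coset_def)
    then have "x = Jadd \<phi> (Jadd s t)"
      using \<phi> s_maps uJ_eA_maps Jadd_assoc by auto
    then show "x \<in> omega_class \<phi>"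
      using unit_range_add[OF s t(1)] by (auto simp: coset_def)
  qed
  show "omega_class \<phi> \<subseteq> omega_class (Jadd \<phi> s)"
  proof
    fix x assume "x \<in> omega_class \<phi>"
    then obtain t where t: "t \<in> unit_range" "x = Jadd \<phi> t"
      by (auto simp: coset_def)
    obtain s' where s': "s' \<in> unit_range" "Jadd s s' = Jzero"
      using unit_range_inverse_ex s by blast
    have maps: "t \<in> eA_maps" "s' \<in> eA_maps"
      using t s' uJ_eA_maps by auto
    have "Jadd (Jadd \<phi> s) (Jadd s' t) = Jadd \<phi> (Jadd (Jadd s s') t)"
      using \<phi> s_maps maps by (simp add: Jadd_assoc Jadd_eA_maps)
    also have "\<dots> = x"
      using s' t maps by (simp add: Jadd_zero_left)
    finally show "x \<in> omega_class (Jadd \<phi> s)"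
      using unit_range_add[OF s'(1) t(1)] by (auto simp: coset_def)
  qed
qed

lemma omega_class_memD: "\<psi> \<in> omega_class \<phi> \<Longrightarrow> \<exists>y\<in>C. \<psi> = Jadd \<phi> (uJ y)"
  by (auto simp: coset_def)

lemma omega_class_eq: "\<phi> \<in> eA_maps \<Longrightarrow> \<psi> \<in> omega_class \<phi> \<Longrightarrow> omega_class \<psi> = omega_class \<phi>"
  using omega_class_memD omega_class_add_unit by blast

lemma omega_class_eq_zero_D:
  assumes "\<phi> \<in> eA_maps" "omega_class \<phi> = omega_class Jzero"
  shows "\<exists>y\<in>C. \<phi> = uJ y"
proof -
  have "\<phi> \<in> omega_class Jzero"
    using omega_class_self[OF assms(1)] assms(2) by simp
  then obtain y where "y \<in> C" "\<phi> = Jadd Jzero (uJ y)"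
    using omega_class_memD by blast
  then show ?thesis
    using Jadd_zero_left uJ_eA_maps by auto
qed

text \<open>The operations of \<^const>\<open>quotmod\<close> pick representatives with \<open>SOME\<close>;
  these differ from the given ones by an element of the unit range.\<close>

lemma some_omega_class: "\<phi> \<in> eA_maps \<Longrightarrow> \<exists>y\<in>C. (SOME x. x \<in> omega_class \<phi>) = Jadd \<phi> (uJ y)"
  using omega_class_self someI omega_class_memD by metis

lemma Om_add:
  assumes "\<phi> \<in> eA_maps" "\<psi> \<in> eA_maps"
  shows "madd Om (omega_class \<phi>) (omega_class \<psi>) = omega_class (Jadd \<phi> \<psi>)"
proof -
  obtain y where y: "y \<in> C" "(SOME x. x \<in> omega_class \<phi>) = Jadd \<phi> (uJ y)"
    using some_omega_class assms(1) by blast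
  obtain y' where y': "y' \<in> C" "(SOME x. x \<in> omega_class \<psi>) = Jadd \<psi> (uJ y')"
    using some_omega_class assms(2) by blast
  have "madd Om (omega_class \<phi>) (omega_class \<psi>) = omega_class (Jadd (Jadd \<phi> (uJ y)) (Jadd \<psi> (uJ y')))"
    using y y' by (simp add: omega_def quotmod_def)
  also have "Jadd (Jadd \<phi> (uJ y)) (Jadd \<psi> (uJ y')) = Jadd (Jadd \<phi> \<psi>) (uJ (add y y'))"
    using assms y y' by (simp add: Jadd_Jadd_swap uJ_eA_maps uJ_add)
  also have "omega_class \<dots> = omega_class (Jadd \<phi> \<psi>)"
    using y y' assms by (intro omega_class_add_unit Jadd_eA_maps) auto
  finally show ?thesis .
qed

lemma Om_act:
  assumes "a \<in> CQ n" "\<phi> \<in> eA_maps"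
  shows "mact Om a (omega_class \<phi>) = omega_class (Jact a \<phi>)"
proof -
  obtain y where y: "y \<in> C" "(SOME x. x \<in> omega_class \<phi>) = Jadd \<phi> (uJ y)"
    using some_omega_class assms(2) by blast
  have "mact Om a (omega_class \<phi>) = omega_class (Jact a (Jadd \<phi> (uJ y)))"
    using y by (simp add: omega_def quotmod_def)
  also have "Jact a (Jadd \<phi> (uJ y)) = Jadd (Jact a \<phi>) (uJ (act a y))"
    using assms y by (simp add: Jact_Jadd uJ_eA_maps Jact_uJ)
  also have "omega_class \<dots> = omega_class (Jact a \<phi>)"
    using assms y by (intro omega_class_add_unit Jact_eA_maps) auto
  finally show ?thesis .
qed

lemma Om_zero: "mzero Om = omega_class Jzero"
  by (simp add: omega_def quotmod_def)

lemma Om_car: "mcar Om = omega_class ` JC"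
  by (simp add: omega_def quotmod_def)

end

section \<open>The map \<open>\<psi> : Hom\<^sub>Z(e\<^sub>v M, e\<^sub>v N) \<rightarrow> Hom\<^sub>A(M, \<omega>N)\<close>\<close>

locale vertex_pair = M: vertex_module n m M v + N: vertex_module n m N v
  for n m :: nat and M :: "'m amod" and v :: int and N :: "'k amod"
begin

definition adjunct :: "('m \<Rightarrow> 'k) \<Rightarrow> 'm \<Rightarrow> (qel \<Rightarrow> 'k)" where
  "adjunct h x = restrict (\<lambda>b. h (mact M b x)) (eA n v)"

definition omega_map :: "('m \<Rightarrow> 'k) \<Rightarrow> 'm \<Rightarrow> (qel \<Rightarrow> 'k) set" where
  "omega_map h = restrict (\<lambda>x. N.omega_class (adjunct h x)) (mcar M)"

lemma homZ_D:
  assumes "h \<in> homZ n v M N"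
  shows "h \<in> extensional (eV M v)" "\<And>x. x \<in> eV M v \<Longrightarrow> h x \<in> eV N v"
    "\<And>x y. x \<in> eV M v \<Longrightarrow> y \<in> eV M v \<Longrightarrow> h (M.add x y) = N.add (h x) (h y)"
    "\<And>x z. x \<in> eV M v \<Longrightarrow> h (M.act (zelt n z) x) = N.act (zelt n z) (h x)"
  using assms unfolding homZ_def by auto

lemma hom_D:
  assumes "f \<in> hom n M N"
  shows "f \<in> extensional M.C" "\<And>x. x \<in> M.C \<Longrightarrow> f x \<in> N.C"
    "\<And>x y. x \<in> M.C \<Longrightarrow> y \<in> M.C \<Longrightarrow> f (M.add x y) = N.add (f x) (f y)"
    "\<And>x a. a \<in> CQ n \<Longrightarrow> x \<in> M.C \<Longrightarrow> f (M.act a x) = N.act a (f x)"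
  using assms unfolding hom_def by auto

lemma homZ_zero:
  assumes "h \<in> homZ n v M N"
  shows "h M.zer = N.zer"
proof -
  have c: "h M.zer \<in> N.C"
    using homZ_D(2)[OF assms M.eV_zero] N.eV_subset by auto
  have "h M.zer = N.add (h M.zer) (h M.zer)"
    using homZ_D(3)[OF assms M.eV_zero M.eV_zero] by simp
  then show ?thesis
    using N.add_eq_self_imp_zero[OF c c] by simp
qed

lemma adjunct_JC:
  assumes h: "h \<in> homZ n v M N" and x: "x \<in> M.C"
  shows "adjunct h x \<in> N.JC"
  unfolding N.JC_eq
proof (intro CollectI conjI ballI allI)
  show "adjunct h x \<in> extensional N.eAv"
    by (simp add: adjunct_def)
  show "adjunct h x ` N.eAv \<subseteq> eV N v"
    using homZ_D(2)[OF h] M.act_eA_eV x by (auto simp: adjunct_def)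
  fix b assume b: "b \<in> N.eAv"
  have bx: "M.act b x \<in> eV M v"
    using M.act_eA_eV b x by simp
  show "adjunct h x (qadd b c) = N.add (adjunct h x b) (adjunct h x c)" if c: "c \<in> N.eAv" for c
    using b c x homZ_D(3)[OF h bx M.act_eA_eV[OF c x]] by (simp add: adjunct_def qadd_eA M.act_qadd eA_CQ)
  show "adjunct h x (qmul n (zelt n z) b) = N.act (zelt n z) (adjunct h x b)" for z
    using b x homZ_D(4)[OF h bx] by (simp add: adjunct_def zelt_eA M.act_qmul zelt_CQ eA_CQ)
next
  fix b assume "b \<in> N.eAv \<inter> Ibar n m"
  then show "adjunct h x b = N.zer"
    using x homZ_zero[OF h] by (simp add: adjunct_def M.act_Ibar)
qed

lemma adjunct_eA_maps: "h \<in> homZ n v M N \<Longrightarrow> x \<in> M.C \<Longrightarrow> adjunct h x \<in> N.eA_maps"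
  using adjunct_JC N.JC_eA_maps by blast

lemma adjunct_add:
  assumes h: "h \<in> homZ n v M N" and x: "x \<in> M.C" and y: "y \<in> M.C"
  shows "adjunct h (M.add x y) = N.Jadd (adjunct h x) (adjunct h y)"
proof (rule N.eA_maps_eqI)
  show "adjunct h (M.add x y) \<in> N.eA_maps" "N.Jadd (adjunct h x) (adjunct h y) \<in> N.eA_maps"
    using adjunct_eA_maps h x y N.Jadd_eA_maps by simp_all
  fix b assume b: "b \<in> N.eAv"
  show "adjunct h (M.add x y) b = N.Jadd (adjunct h x) (adjunct h y) b"
    using b x y homZ_D(3)[OF h M.act_eA_eV[OF b x] M.act_eA_eV[OF b y]]
    by (simp add: adjunct_def N.Jadd_eq M.act_add eA_CQ)
qed

lemma adjunct_act:
  assumes h: "h \<in> homZ n v M N" and x: "x \<in> M.C" and a: "a \<in> CQ n"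
  shows "adjunct h (M.act a x) = N.Jact a (adjunct h x)"
proof (rule N.eA_maps_eqI)
  show "adjunct h (M.act a x) \<in> N.eA_maps" "N.Jact a (adjunct h x) \<in> N.eA_maps"
    using adjunct_eA_maps h x N.Jact_eA_maps a by simp_all
  fix b assume "b \<in> N.eAv"
  then show "adjunct h (M.act a x) b = N.Jact a (adjunct h x) b"
    using x a by (simp add: adjunct_def N.Jact_eq qmul_right_eA M.act_qmul eA_CQ)
qed

lemma adjunct_zero:
  assumes h: "h \<in> homZ n v M N"
  shows "adjunct h M.zer = N.Jzero"
proof (rule N.eA_maps_eqI)
  show "adjunct h M.zer \<in> N.eA_maps"
    using adjunct_eA_maps[OF h] by simp
  fix b assume "b \<in> N.eAv"
  then show "adjunct h M.zer b = N.Jzero b"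
    by (simp add: adjunct_def N.Jzero_eq homZ_zero[OF h] eA_CQ)
qed (rule N.Jzero_eA_maps)

lemma adjunct_homZ_lc:
  assumes h: "h \<in> homZ n v M N" and h': "h' \<in> homZ n v M N" and x: "x \<in> M.C"
  shows "adjunct (homZ_lc n v M N c h h') x = N.Jadd (N.Jact (qscal n c) (adjunct h x)) (adjunct h' x)"
proof (rule N.eA_maps_eqI)
  let ?h = "homZ_lc n v M N c h h'"
  have val: "h (M.act b x) \<in> N.C" "h' (M.act b x) \<in> N.C" if "b \<in> N.eAv" for b
    using homZ_D(2)[OF h] homZ_D(2)[OF h'] M.act_eA_eV[OF that x] N.eV_subset by auto
  show "adjunct ?h x \<in> N.eA_maps"
    using val by (auto simp: N.eA_maps_def adjunct_def homZ_lc_def M.act_eA_eV[OF _ x] qscal_CQ)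
  show "N.Jadd (N.Jact (qscal n c) (adjunct h x)) (adjunct h' x) \<in> N.eA_maps"
    using adjunct_eA_maps[OF h x] adjunct_eA_maps[OF h' x] by (intro N.Jadd_eA_maps N.Jact_eA_maps qscal_CQ)
  fix b assume b: "b \<in> N.eAv"
  have bx: "M.act b x \<in> eV M v"
    using M.act_eA_eV b x by simp
  have "h (M.act (qmul n b (qscal n c)) x) = h (M.act (zelt n (fps_const c)) (M.act b x))"
    using x eA_CQ[OF b] by (simp add: qscal_central[OF M.n_pos] M.act_qmul qscal_CQ zelt_const)
  also have "\<dots> = N.act (qscal n c) (h (M.act b x))"
    using homZ_D(4)[OF h bx, of "fps_const c"] by (simp add: zelt_const)
  finally show "adjunct ?h x b = N.Jadd (N.Jact (qscal n c) (adjunct h x)) (adjunct h' x) b"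
    using b bx by (simp add: adjunct_def homZ_lc_def N.Jadd_eq N.Jact_eq qmul_right_eA qscal_CQ)
qed

lemma omega_map_hom:
  assumes h: "h \<in> homZ n v M N"
  shows "omega_map h \<in> hom n M N.Om"
  unfolding hom_def
proof (intro CollectI conjI ballI subsetI)
  show "omega_map h \<in> extensional M.C"
    by (simp add: omega_map_def)
  show "y \<in> mcar N.Om" if "y \<in> omega_map h ` M.C" for y
    using that adjunct_JC[OF h] by (auto simp: omega_map_def N.Om_car)
  show "omega_map h (M.add x y) = madd N.Om (omega_map h x) (omega_map h y)" if "x \<in> M.C" "y \<in> M.C" for x y
    using that by (simp add: omega_map_def N.Om_add adjunct_eA_maps[OF h] adjunct_add[OF h])
  show "omega_map h (M.act a x) = mact N.Om a (omega_map h x)" if "a \<in> CQ n" "x \<in> M.C" for a x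
    using that by (simp add: omega_map_def N.Om_act adjunct_eA_maps[OF h] adjunct_act[OF h])
qed

lemma omega_map_homZ_lc:
  assumes h: "h \<in> homZ n v M N" and h': "h' \<in> homZ n v M N"
  shows "omega_map (homZ_lc n v M N c h h') = hom_lc n M N.Om c (omega_map h) (omega_map h')"
proof -
  have "N.omega_class (adjunct (homZ_lc n v M N c h h') x) =
      madd N.Om (mact N.Om (qscal n c) (omega_map h x)) (omega_map h' x)" if x: "x \<in> M.C" for x
    using x adjunct_eA_maps[OF h x] adjunct_eA_maps[OF h' x]
    by (simp add: adjunct_homZ_lc[OF h h' x] omega_map_def N.Om_act N.Om_add qscal_CQ N.Jact_eA_maps)
  then show ?thesis
    by (simp add: omega_map_def hom_lc_def restrict_def fun_eq_iff)
qed

end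

section \<open>The kernel of \<open>\<psi>\<close>\<close>

context vertex_pair
begin

lemma resv_homZ:
  assumes f: "f \<in> hom n M N"
  shows "resv v M f \<in> homZ n v M N"
  unfolding homZ_def
proof (intro CollectI conjI ballI allI subsetI)
  show "resv v M f \<in> extensional (eV M v)"
    by (simp add: resv_def)
next
  fix y assume "y \<in> resv v M f ` eV M v"
  then obtain x where x: "x \<in> M.C" "y = f (M.act (ev v) x)"
    by (auto simp: resv_def eV_def)
  then have "y = N.act (ev v) (f x)"
    using hom_D(4)[OF f] M.ev_v_CQ by simp
  then show "y \<in> eV N v"
    using hom_D(2)[OF f x(1)] by (simp add: eV_def)
next
  fix x y assume xy: "x \<in> eV M v" "y \<in> eV M v"
  then have "x \<in> M.C" "y \<in> M.C"
    using M.eV_subset by auto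
  with xy show "resv v M f (M.add x y) = N.add (resv v M f x) (resv v M f y)"
    using M.eV_add hom_D(3)[OF f] by (simp add: resv_def)
next
  fix z x assume "x \<in> eV M v"
  then show "resv v M f (M.act (zelt n z) x) = N.act (zelt n z) (resv v M f x)"
    using M.eV_zelt hom_D(4)[OF f] M.eV_subset zelt_CQ by (auto simp: resv_def)
qed

lemma adjunct_resv:
  assumes f: "f \<in> hom n M N" and x: "x \<in> M.C"
  shows "adjunct (resv v M f) x = N.uJ (f x)"
proof (rule N.eA_maps_eqI)
  show "adjunct (resv v M f) x \<in> N.eA_maps"
    using adjunct_eA_maps resv_homZ[OF f] x by blast
  show "N.uJ (f x) \<in> N.eA_maps"
    using hom_D(2)[OF f x] N.uJ_eA_maps by blast
  fix b assume b: "b \<in> N.eAv"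
  show "adjunct (resv v M f) x b = N.uJ (f x) b"
    using b x M.act_eA_eV[OF b x] hom_D(4)[OF f] by (simp add: adjunct_def resv_def N.uJ_eq eA_CQ)
qed

lemma omega_map_resv:
  assumes f: "f \<in> hom n M N"
  shows "omega_map (resv v M f) = hom_zero M N.Om"
proof -
  have "N.omega_class (adjunct (resv v M f) x) = N.omega_class N.Jzero" if x: "x \<in> M.C" for x
    using N.omega_class_add_unit[OF N.Jzero_eA_maps, of "N.uJ (f x)"] hom_D(2)[OF f x]
    by (simp add: adjunct_resv[OF f x] N.Jadd_zero_left N.uJ_eA_maps)
  then show ?thesis
    by (simp add: omega_map_def hom_zero_def N.Om_zero restrict_def fun_eq_iff)
qed

text \<open>Conversely, if every adjunct lies in the image of the (injective) unit,
  then \<open>h\<close> lifts to \<open>Hom\<^sub>A(M, N)\<close>.\<close>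

definition unit_lift :: "('m \<Rightarrow> 'k) \<Rightarrow> 'm \<Rightarrow> 'k" where
  "unit_lift h = restrict (\<lambda>x. THE y. y \<in> N.C \<and> adjunct h x = N.uJ y) M.C"

context
  fixes h :: "'m \<Rightarrow> 'k"
  assumes zfN: "Z_free n N" and h: "h \<in> homZ n v M N"
    and factors: "\<forall>x\<in>M.C. \<exists>y\<in>N.C. adjunct h x = N.uJ y"
begin

lemma unit_lift:
  assumes x: "x \<in> M.C"
  shows "unit_lift h x \<in> N.C" "adjunct h x = N.uJ (unit_lift h x)"
proof -
  obtain y where y: "y \<in> N.C" "adjunct h x = N.uJ y"
    using factors x by blast
  have "(THE y. y \<in> N.C \<and> adjunct h x = N.uJ y) = y"
    using y N.unitJ_inj[OF zfN] by (intro the_equality) auto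
  then show "unit_lift h x \<in> N.C" "adjunct h x = N.uJ (unit_lift h x)"
    using x y by (simp_all add: unit_lift_def)
qed

lemma unit_lift_unique: "x \<in> M.C \<Longrightarrow> y \<in> N.C \<Longrightarrow> adjunct h x = N.uJ y \<Longrightarrow> unit_lift h x = y"
  using unit_lift N.unitJ_inj[OF zfN] by metis

lemma unit_lift_hom: "unit_lift h \<in> hom n M N"
  unfolding hom_def
proof (intro CollectI conjI ballI subsetI)
  show "unit_lift h \<in> extensional M.C"
    by (simp add: unit_lift_def)
  show "y \<in> N.C" if "y \<in> unit_lift h ` M.C" for y
    using that unit_lift by auto
  fix x y assume x: "x \<in> M.C" and y: "y \<in> M.C"
  have "adjunct h (M.add x y) = N.uJ (N.add (unit_lift h x) (unit_lift h y))"
    using adjunct_add[OF h x y] unit_lift[OF x] unit_lift[OF y] N.uJ_add by simp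
  then show "unit_lift h (M.add x y) = N.add (unit_lift h x) (unit_lift h y)"
    using unit_lift_unique x y unit_lift by simp
next
  fix a x assume a: "a \<in> CQ n" and x: "x \<in> M.C"
  have "adjunct h (M.act a x) = N.uJ (N.act a (unit_lift h x))"
    using adjunct_act[OF h x a] unit_lift[OF x] N.Jact_uJ a by simp
  then show "unit_lift h (M.act a x) = N.act a (unit_lift h x)"
    using unit_lift_unique x a unit_lift by simp
qed

text \<open>On \<open>e\<^sub>v M\<close> the lift agrees with \<open>h\<close>: evaluate its adjunct at \<open>e\<^sub>v\<close>,
  after checking that its values are fixed by \<open>e\<^sub>v\<close>.\<close>

lemma act_ev_unit_lift:
  assumes xe: "x \<in> eV M v"
  shows "N.act (ev v) (unit_lift h x) = unit_lift h x"
proof -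
  have x: "x \<in> M.C"
    using xe M.eV_subset by auto
  have "N.uJ (N.act (ev v) (unit_lift h x)) = N.uJ (unit_lift h x)"
  proof (rule N.eA_maps_eqI)
    show "N.uJ (N.act (ev v) (unit_lift h x)) \<in> N.eA_maps" "N.uJ (unit_lift h x) \<in> N.eA_maps"
      using unit_lift[OF x] M.ev_v_CQ by (auto intro!: N.uJ_eA_maps)
    fix b assume b: "b \<in> N.eAv"
    have be: "qmul n b (ev v) \<in> N.eAv"
      using qmul_right_eA[OF b M.ev_v_CQ] .
    have "N.uJ (N.act (ev v) (unit_lift h x)) b = N.uJ (unit_lift h x) (qmul n b (ev v))"
      using b be unit_lift[OF x] M.ev_v_CQ by (simp add: N.uJ_eq N.act_qmul eA_CQ)
    also have "\<dots> = h (M.act b (M.act (ev v) x))"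
      using be x b M.ev_v_CQ unit_lift(2)[OF x, symmetric] by (simp add: adjunct_def M.act_qmul eA_CQ)
    also have "\<dots> = N.uJ (unit_lift h x) b"
      using b unit_lift(2)[OF x, symmetric] by (simp add: M.act_ev_eV[OF xe] adjunct_def)
    finally show "N.uJ (N.act (ev v) (unit_lift h x)) b = N.uJ (unit_lift h x) b" .
  qed
  then show ?thesis
    using N.unitJ_inj[OF zfN] unit_lift[OF x] M.ev_v_CQ by simp
qed

lemma resv_unit_lift: "resv v M (unit_lift h) = h"
proof (rule extensionalityI)
  show "resv v M (unit_lift h) \<in> extensional (eV M v)"
    by (simp add: resv_def)
  show "h \<in> extensional (eV M v)"
    using homZ_D(1)[OF h] .
  fix x assume xe: "x \<in> eV M v"
  then have x: "x \<in> M.C"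
    using M.eV_subset by auto
  have "h x = adjunct h x (ev v)"
    using M.act_ev_eV[OF xe] M.ev_v_eA by (simp add: adjunct_def)
  also have "\<dots> = N.act (ev v) (unit_lift h x)"
    using unit_lift[OF x] M.ev_v_eA by (simp add: N.uJ_eq)
  finally show "resv v M (unit_lift h) x = h x"
    using act_ev_unit_lift[OF xe] xe by (simp add: resv_def)
qed

end

lemma omega_map_kernel:
  assumes zfN: "Z_free n N"
  shows "{h \<in> homZ n v M N. omega_map h = hom_zero M N.Om} = resv v M ` hom n M N"
proof
  show "resv v M ` hom n M N \<subseteq> {h \<in> homZ n v M N. omega_map h = hom_zero M N.Om}"
    using resv_homZ omega_map_resv by blast
  show "{h \<in> homZ n v M N. omega_map h = hom_zero M N.Om} \<subseteq> resv v M ` hom n M N"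
  proof
    fix h assume "h \<in> {h \<in> homZ n v M N. omega_map h = hom_zero M N.Om}"
    then have h: "h \<in> homZ n v M N" and z: "omega_map h = hom_zero M N.Om"
      by auto
    have "\<exists>y\<in>N.C. adjunct h x = N.uJ y" if x: "x \<in> M.C" for x
    proof -
      have "N.omega_class (adjunct h x) = N.omega_class N.Jzero"
        using fun_cong[OF z, of x] x by (simp add: omega_map_def hom_zero_def N.Om_zero)
      then show ?thesis
        using N.omega_class_eq_zero_D adjunct_eA_maps[OF h x] by blast
    qed
    then show "h \<in> resv v M ` hom n M N"
      using unit_lift_hom[OF zfN h] resv_unit_lift[OF zfN h] by (metis image_eqI)
  qed
qed

end

section \<open>The image of \<open>\<psi>\<close>\<close>

lemma hom_compose:
  assumes "amodule n m M" "s \<in> hom n M E" "g \<in> hom n E T"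
  shows "restrict (g \<circ> s) (mcar M) \<in> hom n M T"
proof -
  interpret M: amodule n m M by fact
  show ?thesis
    using assms(2,3) by (auto simp: hom_def image_subset_iff)
qed

context vertex_pair
begin

definition eval_ev :: "('m \<Rightarrow> (qel \<Rightarrow> 'k)) \<Rightarrow> 'm \<Rightarrow> 'k" where
  "eval_ev G = restrict (\<lambda>x. G x (ev v)) (eV M v)"

context
  fixes G :: "'m \<Rightarrow> (qel \<Rightarrow> 'k)"
  assumes G: "G \<in> hom n M (Jmod n m v N)"
begin

lemma hom_J_D:
  "\<And>y. y \<in> M.C \<Longrightarrow> G y \<in> N.JC"
  "\<And>x y. x \<in> M.C \<Longrightarrow> y \<in> M.C \<Longrightarrow> G (M.add x y) = N.Jadd (G x) (G y)"
  "\<And>a y. a \<in> CQ n \<Longrightarrow> y \<in> M.C \<Longrightarrow> G (M.act a y) = N.Jact a (G y)"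
  using G by (auto simp: hom_def)

lemma eval_ev_homZ: "eval_ev G \<in> homZ n v M N"
  unfolding homZ_def
proof (intro CollectI conjI ballI allI subsetI)
  have JC: "\<phi> b \<in> eV N v" "\<phi> (qmul n (zelt n z) b) = N.act (zelt n z) (\<phi> b)"
    if "\<phi> \<in> N.JC" "b \<in> N.eAv" for \<phi> b z
    using that unfolding N.JC_eq by auto
  show "eval_ev G \<in> extensional (eV M v)"
    by (simp add: eval_ev_def)
  show "y \<in> eV N v" if "y \<in> eval_ev G ` eV M v" for y
    using that hom_J_D(1) JC(1) M.ev_v_eA M.eV_subset by (auto simp: eval_ev_def)
  fix x assume x: "x \<in> eV M v"
  then have xc: "x \<in> M.C"
    using M.eV_subset by auto
  show "eval_ev G (M.add x y) = N.add (eval_ev G x) (eval_ev G y)" if y: "y \<in> eV M v" for y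
    using x y xc M.eV_subset M.eV_add hom_J_D(2) M.ev_v_eA by (auto simp: eval_ev_def N.Jadd_eq)
  fix z
  have "G (M.act (zelt n z) x) (ev v) = G x (qmul n (ev v) (zelt n z))"
    using hom_J_D(3)[OF zelt_CQ xc] M.ev_v_eA by (simp add: N.Jact_eq)
  also have "\<dots> = N.act (zelt n z) (G x (ev v))"
    using JC(2)[OF hom_J_D(1)[OF xc] M.ev_v_eA] zelt_ev_comm[OF M.v_nonneg M.v_less] by simp
  finally show "eval_ev G (M.act (zelt n z) x) = N.act (zelt n z) (eval_ev G x)"
    using x M.eV_zelt by (simp add: eval_ev_def)
qed

lemma adjunct_eval_ev:
  assumes y: "y \<in> M.C"
  shows "adjunct (eval_ev G) y = G y"
proof (rule N.eA_maps_eqI)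
  show "adjunct (eval_ev G) y \<in> N.eA_maps"
    using adjunct_eA_maps eval_ev_homZ y by blast
  show "G y \<in> N.eA_maps"
    using hom_J_D(1)[OF y] N.JC_eA_maps by blast
  fix b assume b: "b \<in> N.eAv"
  have "adjunct (eval_ev G) y b = G (M.act b y) (ev v)"
    using b M.act_eA_eV[OF b y] by (simp add: adjunct_def eval_ev_def)
  also have "\<dots> = G y (qmul n (ev v) b)"
    using hom_J_D(3)[OF eA_CQ[OF b] y] M.ev_v_eA by (simp add: N.Jact_eq)
  finally show "adjunct (eval_ev G) y b = G y b"
    using qmul_ev_eA[OF b] by simp
qed

end

definition split_ext :: "('k \<times> 'm) amod" where
  "split_ext = \<lparr>mcar = N.C \<times> M.C, madd = (\<lambda>p q. (N.add (fst p) (fst q), M.add (snd p) (snd q))),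
     mzero = (N.zer, M.zer), mact = (\<lambda>a p. (N.act a (fst p), M.act a (snd p)))\<rparr>"

lemma split_ext_is_mod: "is_mod n m split_ext"
  unfolding is_mod_def
proof (intro conjI ballI)
  show "mzero split_ext \<in> mcar split_ext"
    by (simp add: split_ext_def)
  fix x assume x: "x \<in> mcar split_ext"
  show "madd split_ext (mzero split_ext) x = x" "mact split_ext (qone n) x = x"
    using x by (auto simp: split_ext_def N.act_qone M.act_qone)
  show "\<exists>y\<in>mcar split_ext. madd split_ext x y = mzero split_ext"
    using x N.add_inverse_ex M.add_inverse_ex by (fastforce simp: split_ext_def)
  fix y assume y: "y \<in> mcar split_ext"
  show "madd split_ext x y \<in> mcar split_ext" "madd split_ext x y = madd split_ext y x"
    using x y by (auto simp: split_ext_def N.add_comm M.add_comm)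
  show "madd split_ext (madd split_ext x y) z = madd split_ext x (madd split_ext y z)"
    if "z \<in> mcar split_ext" for z
    using x y that by (auto simp: split_ext_def N.add_assoc M.add_assoc)
  show "mact split_ext a (madd split_ext x y) = madd split_ext (mact split_ext a x) (mact split_ext a y)"
    if "a \<in> CQ n" for a
    using x y that by (auto simp: split_ext_def N.act_add M.act_add)
next
  fix a x assume a: "a \<in> CQ n" and x: "x \<in> mcar split_ext"
  show "mact split_ext a x \<in> mcar split_ext"
    using x a by (auto simp: split_ext_def)
  show "mact split_ext (qadd a b) x = madd split_ext (mact split_ext a x) (mact split_ext b x)"
    "mact split_ext (qmul n a b) x = mact split_ext a (mact split_ext b x)" if "b \<in> CQ n" for b
    using x a that by (auto simp: split_ext_def N.act_qadd M.act_qadd N.act_qmul M.act_qmul)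
next
  fix a x assume "a \<in> Ibar n m" "x \<in> mcar split_ext"
  then show "mact split_ext a x = mzero split_ext"
    by (auto simp: split_ext_def N.act_Ibar M.act_Ibar)
qed

lemma split_ext_is_ext: "is_ext n m M N split_ext"
  unfolding is_ext_def using split_ext_is_mod
  by (auto simp: split_ext_def hom_def ext_inc_def ext_proj_def)

lemma split_ext_splits: "ext_splits n M N split_ext"
  unfolding ext_splits_def
  by (rule bexI[of _ "restrict (\<lambda>y. (N.zer, y)) M.C"]) (auto simp: hom_def split_ext_def ext_proj_def)

definition split_ext_to_J :: "('m \<Rightarrow> 'k) \<Rightarrow> 'k \<times> 'm \<Rightarrow> (qel \<Rightarrow> 'k)" where
  "split_ext_to_J h = restrict (\<lambda>p. N.Jadd (N.uJ (fst p)) (adjunct h (snd p))) (N.C \<times> M.C)"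

lemma split_ext_to_J_hom:
  assumes h: "h \<in> homZ n v M N"
  shows "split_ext_to_J h \<in> hom n split_ext (Jmod n m v N)"
  unfolding hom_def
proof (intro CollectI conjI ballI subsetI)
  show "split_ext_to_J h \<in> extensional (mcar split_ext)"
    by (simp add: split_ext_to_J_def split_ext_def)
  show "y \<in> N.JC" if "y \<in> split_ext_to_J h ` mcar split_ext" for y
    using that N.Jadd_JC N.uJ_JC adjunct_JC[OF h] by (auto simp: split_ext_to_J_def split_ext_def)
next
  fix p q assume "p \<in> mcar split_ext" "q \<in> mcar split_ext"
  then obtain a b c d where pq: "p = (a, b)" "q = (c, d)" "a \<in> N.C" "b \<in> M.C" "c \<in> N.C" "d \<in> M.C"
    by (auto simp: split_ext_def)
  then show "split_ext_to_J h (madd split_ext p q) = madd (Jmod n m v N) (split_ext_to_J h p) (split_ext_to_J h q)"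
    by (simp add: split_ext_to_J_def split_ext_def N.uJ_add adjunct_add[OF h] N.Jadd_Jadd_swap
        adjunct_eA_maps[OF h] N.uJ_eA_maps)
next
  fix a p assume a: "a \<in> CQ n" and "p \<in> mcar split_ext"
  then obtain x y where p: "p = (x, y)" "x \<in> N.C" "y \<in> M.C"
    by (auto simp: split_ext_def)
  then show "split_ext_to_J h (mact split_ext a p) = mact (Jmod n m v N) a (split_ext_to_J h p)"
    using a adjunct_eA_maps[OF h] N.uJ_eA_maps
    by (simp add: split_ext_to_J_def split_ext_def N.Jact_Jadd N.Jact_uJ adjunct_act[OF h])
qed

lemma represents_delta_omega_map:
  assumes h: "h \<in> homZ n v M N"
  shows "represents_delta n m v M N split_ext (omega_map h)"
  unfolding represents_delta_def
proof (intro bexI conjI ballI)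
  show "split_ext_to_J h \<in> hom n split_ext (Jmod n m v N)"
    using split_ext_to_J_hom[OF h] .
  fix x assume x: "x \<in> N.C"
  show "split_ext_to_J h (x, mzero M) = unitJ n v N x"
    using x adjunct_zero[OF h] N.Jadd_zero_right N.uJ_eA_maps by (simp add: split_ext_to_J_def)
  fix y assume y: "y \<in> M.C"
  have "split_ext_to_J h (x, y) = N.Jadd (adjunct h y) (N.uJ x)"
    using x y N.Jadd_comm adjunct_eA_maps[OF h] N.uJ_eA_maps by (simp add: split_ext_to_J_def)
  then show "split_ext_to_J h (x, y) \<in> omega_map h y"
    using x y by (auto simp: omega_map_def coset_def)
qed

lemma omega_map_image_subset:
  "h \<in> homZ n v M N \<Longrightarrow>
    \<exists>E. is_ext n m M N E \<and> represents_delta n m v M N E (omega_map h) \<and> ext_splits n M N E"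
  using split_ext_is_ext represents_delta_omega_map split_ext_splits by blast

lemma omega_map_image_supset:
  assumes f: "f \<in> hom n M N.Om" and E: "is_ext n m M N E"
    and delta: "represents_delta n m v M N E f" and splits: "ext_splits n M N E"
  shows "f \<in> omega_map ` homZ n v M N"
proof -
  obtain g where g: "g \<in> hom n E (Jmod n m v N)" and g_f: "\<forall>x\<in>N.C. \<forall>y\<in>M.C. g (x, y) \<in> f y"
    using delta unfolding represents_delta_def by blast
  obtain s where s: "s \<in> hom n M E" and s_proj: "\<forall>y\<in>M.C. ext_proj M N (s y) = y"
    using splits unfolding ext_splits_def by blast
  define G where "G = restrict (g \<circ> s) M.C"
  have G: "G \<in> hom n M (Jmod n m v N)"
    unfolding G_def using hom_compose[OF M.amodule_axioms s g] .
  have "omega_map (eval_ev G) y = f y" if y: "y \<in> M.C" for y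
  proof -
    have "s y \<in> N.C \<times> M.C"
      using s y E by (auto simp: hom_def is_ext_def)
    moreover have "snd (s y) = y"
      using s_proj[rule_format, OF y] calculation by (simp add: ext_proj_def)
    ultimately have "G y \<in> f y"
      using g_f y by (metis G_def comp_apply mem_Times_iff prod.collapse restrict_apply')
    moreover obtain \<phi> where "\<phi> \<in> N.JC" "f y = N.omega_class \<phi>"
      using f y by (auto simp: hom_def N.Om_car)
    ultimately have "N.omega_class (G y) = f y"
      using N.omega_class_eq N.JC_eA_maps by blast
    then show ?thesis
      using y adjunct_eval_ev[OF G y] by (simp add: omega_map_def)
  qed
  then have "omega_map (eval_ev G) = f"
    using f by (intro extensionalityI[of _ M.C]) (auto simp: omega_map_def hom_def)
  then show ?thesis
    using eval_ev_homZ[OF G] by blast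
qed

end

section \<open>Every extension is a pullback of \<open>N \<rightarrow> J\<^sub>v N \<rightarrow> \<omega>N\<close>\<close>

lemma map2_plus_map2_minus:
  "length zs = length zs' \<Longrightarrow> map2 (+) zs' (map2 (-) zs zs') = (zs :: 'a::ab_group_add list)"
proof (induction zs arbitrary: zs')
  case (Cons z zs)
  then show ?case
    by (cases zs') auto
qed simp

lemma map2_minus_eq_zero_imp_eq:
  "length zs = length zs' \<Longrightarrow> (\<forall>d\<in>set (map2 (-) zs zs'). d = 0) \<Longrightarrow> zs = (zs' :: 'a::ab_group_add list)"
proof (induction zs arbitrary: zs')
  case (Cons z zs)
  then show ?case
    by (cases zs') auto
qed simp

locale vertex_extension = vertex_pair n m M v N for n m :: nat and M :: "'m amod" and v :: int and N :: "'k amod" +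
  fixes E :: "('k \<times> 'm) amod"
  assumes is_ext: "is_ext n m M N E" and Z_free_M: "Z_free n M"
begin

sublocale E: amodule n m E
  using is_ext M.n_pos by unfold_locales (simp_all add: is_ext_def)

lemma E_car: "mcar E = N.C \<times> M.C"
  using is_ext by (simp add: is_ext_def)

lemma E_carD: "p \<in> mcar E \<Longrightarrow> fst p \<in> N.C" "p \<in> mcar E \<Longrightarrow> snd p \<in> M.C"
  by (auto simp: E_car)

lemma E_carI: "x \<in> N.C \<Longrightarrow> y \<in> M.C \<Longrightarrow> (x, y) \<in> mcar E"
  by (simp add: E_car)

lemma ext_inc_hom: "ext_inc M N \<in> hom n N E"
  using is_ext by (simp add: is_ext_def)

lemma ext_proj_hom: "ext_proj M N \<in> hom n E M"
  using is_ext by (simp add: is_ext_def)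

lemma E_zero: "mzero E = (N.zer, M.zer)"
  using hom_zero[OF N.amodule_axioms E.amodule_axioms ext_inc_hom] by (simp add: ext_inc_def)

lemma E_add_inc: "x \<in> N.C \<Longrightarrow> y \<in> N.C \<Longrightarrow> madd E (x, M.zer) (y, M.zer) = (N.add x y, M.zer)"
  using ext_inc_hom unfolding hom_def ext_inc_def by auto

lemma E_act_inc: "a \<in> CQ n \<Longrightarrow> x \<in> N.C \<Longrightarrow> mact E a (x, M.zer) = (N.act a x, M.zer)"
  using ext_inc_hom unfolding hom_def ext_inc_def by auto

lemma snd_E_add: "p \<in> mcar E \<Longrightarrow> q \<in> mcar E \<Longrightarrow> snd (madd E p q) = M.add (snd p) (snd q)"
  using ext_proj_hom E.add_closed unfolding hom_def ext_proj_def by (simp add: E_car[symmetric])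

lemma snd_E_act: "a \<in> CQ n \<Longrightarrow> p \<in> mcar E \<Longrightarrow> snd (mact E a p) = M.act a (snd p)"
  using ext_proj_hom E.act_closed unfolding hom_def ext_proj_def by (simp add: E_car[symmetric])

lemma E_eq_inc_add:
  assumes p: "p \<in> mcar E" and q: "q \<in> mcar E" and e: "snd p = snd q"
  shows "\<exists>x\<in>N.C. p = madd E (x, M.zer) q"
proof -
  obtain w where w: "w \<in> mcar E" "madd E q w = mzero E"
    using E.add_inverse_ex q by blast
  have "snd (madd E p w) = M.zer"
    using snd_E_add[OF p w(1)] snd_E_add[OF q w(1)] w(2) e E_zero by simp
  moreover have "madd E p w \<in> mcar E"
    using p w by simp
  ultimately obtain x where x: "x \<in> N.C" "madd E p w = (x, M.zer)"
    by (cases "madd E p w") (auto simp: E_car)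
  have "p = madd E p (madd E w q)"
    using w p q by (simp add: E.add_comm)
  also have "\<dots> = madd E (madd E p w) q"
    using p q w by (simp add: E.add_assoc)
  finally show ?thesis
    using x by auto
qed

definition zbasis :: "'m list" where
  "zbasis = (SOME bs. distinct bs \<and> set bs \<subseteq> M.C \<and>
     (\<forall>x\<in>M.C. \<exists>zs. length zs = length bs \<and> x = M.zcomb zs bs) \<and>
     (\<forall>zs. length zs = length bs \<and> M.zcomb zs bs = M.zer \<longrightarrow> (\<forall>z\<in>set zs. z = 0)))"

lemma zbasis:
  "set zbasis \<subseteq> M.C"
  "\<forall>x\<in>M.C. \<exists>zs. length zs = length zbasis \<and> x = M.zcomb zs zbasis"
  "\<forall>zs. length zs = length zbasis \<and> M.zcomb zs zbasis = M.zer \<longrightarrow> (\<forall>z\<in>set zs. z = 0)"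
proof -
  have "\<exists>bs. distinct bs \<and> set bs \<subseteq> M.C \<and> (\<forall>x\<in>M.C. \<exists>zs. length zs = length bs \<and> x = M.zcomb zs bs) \<and>
     (\<forall>zs. length zs = length bs \<and> M.zcomb zs bs = M.zer \<longrightarrow> (\<forall>z\<in>set zs. z = 0))"
    using Z_free_M unfolding Z_free_def M.zcomb_def by blast
  from someI_ex[OF this] show "set zbasis \<subseteq> M.C"
    "\<forall>x\<in>M.C. \<exists>zs. length zs = length zbasis \<and> x = M.zcomb zs zbasis"
    "\<forall>zs. length zs = length zbasis \<and> M.zcomb zs zbasis = M.zer \<longrightarrow> (\<forall>z\<in>set zs. z = 0)"
    unfolding zbasis_def by blast+
qed

lemma zcomb_zbasis_inj:
  assumes l: "length zs = length zbasis" "length zs' = length zbasis"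
    and e: "M.zcomb zs zbasis = M.zcomb zs' zbasis"
  shows "zs = zs'"
proof -
  let ?d = "map2 (-) zs zs'"
  have ld: "length ?d = length zbasis"
    using l by simp
  have "M.add (M.zcomb zs' zbasis) (M.zcomb ?d zbasis) = M.add (M.zcomb zs' zbasis) M.zer"
    using M.zcomb_add[OF zbasis(1) l(2) ld] map2_plus_map2_minus[of zs zs'] l e zbasis(1) by simp
  then have "M.zcomb ?d zbasis = M.zer"
    using M.add_left_cancel[of "M.zcomb zs' zbasis" "M.zcomb ?d zbasis" M.zer] zbasis(1) by simp
  then have "\<forall>d\<in>set ?d. d = 0"
    using zbasis(3) ld by blast
  then show ?thesis
    using map2_minus_eq_zero_imp_eq[of zs zs'] l by argo
qed

definition zcoords :: "'m \<Rightarrow> complex fps list" where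
  "zcoords y = (SOME zs. length zs = length zbasis \<and> y = M.zcomb zs zbasis)"

lemma zcoords:
  assumes "y \<in> M.C"
  shows "length (zcoords y) = length zbasis \<and> y = M.zcomb (zcoords y) zbasis"
proof -
  have "\<exists>zs. length zs = length zbasis \<and> y = M.zcomb zs zbasis"
    using zbasis(2) assms by blast
  then show ?thesis
    unfolding zcoords_def by (rule someI_ex)
qed

lemma zcoords_eq: "length zs = length zbasis \<Longrightarrow> y = M.zcomb zs zbasis \<Longrightarrow> zcoords y = zs"
  using zcoords zcomb_zbasis_inj M.zcomb_closed zbasis(1) by metis

definition zsection :: "'m \<Rightarrow> 'k \<times> 'm" where
  "zsection y = E.zcomb (zcoords y) (map (\<lambda>b. (N.zer, b)) zbasis)"

lemma zbasis_lift_E: "set (map (\<lambda>b. (N.zer, b)) zbasis) \<subseteq> mcar E"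
  using zbasis(1) by (auto simp: E_car)

lemma zsection_E: "zsection y \<in> mcar E"
  using zbasis_lift_E by (simp add: zsection_def)

lemma snd_zsection:
  assumes "y \<in> M.C"
  shows "snd (zsection y) = y"
proof -
  have "ext_proj M N (zsection y) = M.zcomb (zcoords y) (map (ext_proj M N) (map (\<lambda>b. (N.zer, b)) zbasis))"
    unfolding zsection_def by (rule hom_zcomb[OF E.amodule_axioms M.amodule_axioms ext_proj_hom zbasis_lift_E])
  also have "map (ext_proj M N) (map (\<lambda>b. (N.zer, b)) zbasis) = zbasis"
    unfolding map_map by (rule map_idI) (use zbasis(1) in \<open>auto simp: ext_proj_def\<close>)
  finally show ?thesis
    using zcoords[OF assms] zsection_E by (simp add: ext_proj_def E_car)
qed

lemma zsection_add:
  assumes "x \<in> M.C" "y \<in> M.C"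
  shows "zsection (M.add x y) = madd E (zsection x) (zsection y)"
proof -
  have "zcoords (M.add x y) = map2 (+) (zcoords x) (zcoords y)"
    using zcoords assms M.zcomb_add[OF zbasis(1)] by (intro zcoords_eq) auto
  then show ?thesis
    using E.zcomb_add[OF zbasis_lift_E] zcoords assms by (simp add: zsection_def)
qed

lemma zsection_zelt:
  assumes "y \<in> M.C"
  shows "zsection (M.act (zelt n c) y) = mact E (zelt n c) (zsection y)"
proof -
  have "zcoords (M.act (zelt n c) y) = map (\<lambda>z. c * z) (zcoords y)"
    using zcoords assms M.zcomb_scale[OF zbasis(1)] by (intro zcoords_eq) auto
  then show ?thesis
    using E.zcomb_scale[OF zbasis_lift_E] by (simp add: zsection_def)
qed

lemma zsection_zero: "zsection M.zer = mzero E"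
proof -
  have "madd E (zsection M.zer) (zsection M.zer) = zsection M.zer"
    using zsection_add[of M.zer M.zer] by simp
  then show ?thesis
    using E.add_eq_self_imp_zero zsection_E by blast
qed

definition zretract :: "'k \<times> 'm \<Rightarrow> 'k" where
  "zretract p = (THE x. x \<in> N.C \<and> p = madd E (x, M.zer) (zsection (snd p)))"

lemma inc_add_zsection_inj:
  assumes "x \<in> N.C" "x' \<in> N.C" "q \<in> mcar E" "madd E (x, M.zer) q = madd E (x', M.zer) q"
  shows "x = x'"
proof -
  have c: "(x, M.zer) \<in> mcar E" "(x', M.zer) \<in> mcar E"
    using assms E_carI by auto
  then have "madd E q (x, M.zer) = madd E q (x', M.zer)"
    using assms(3,4) E.add_comm by metis
  then show ?thesis
    using E.add_left_cancel[OF assms(3) c] by simp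
qed

lemma zretract:
  assumes p: "p \<in> mcar E"
  shows "zretract p \<in> N.C" "p = madd E (zretract p, M.zer) (zsection (snd p))"
proof -
  obtain x where x: "x \<in> N.C" "p = madd E (x, M.zer) (zsection (snd p))"
    using E_eq_inc_add[OF p zsection_E] snd_zsection[OF E_carD(2)[OF p]] by metis
  have "zretract p = x"
    unfolding zretract_def
  proof (rule the_equality)
    fix y assume "y \<in> N.C \<and> p = madd E (y, M.zer) (zsection (snd p))"
    then show "y = x"
      using x inc_add_zsection_inj[OF _ _ zsection_E] by metis
  qed (use x in simp)
  with x show "zretract p \<in> N.C" "p = madd E (zretract p, M.zer) (zsection (snd p))"
    by simp_all
qed

lemma zretract_eq:
  assumes "p \<in> mcar E" "x \<in> N.C" "p = madd E (x, M.zer) (zsection (snd p))"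
  shows "zretract p = x"
  using zretract[OF assms(1)] assms inc_add_zsection_inj zsection_E by metis

lemma zretract_add:
  assumes p: "p \<in> mcar E" and q: "q \<in> mcar E"
  shows "zretract (madd E p q) = N.add (zretract p) (zretract q)"
proof -
  let ?x = "N.add (zretract p) (zretract q)"
  have "madd E p q = madd E (madd E (zretract p, M.zer) (zsection (snd p)))
      (madd E (zretract q, M.zer) (zsection (snd q)))"
    using zretract(2)[OF p] zretract(2)[OF q] by simp
  also have "\<dots> = madd E (madd E (zretract p, M.zer) (zretract q, M.zer))
      (madd E (zsection (snd p)) (zsection (snd q)))"
    using zretract(1)[OF p] zretract(1)[OF q] zsection_E E_carI by (intro E.add_add_swap) auto
  also have "\<dots> = madd E (?x, M.zer) (zsection (snd (madd E p q)))"
    using p q zretract(1) E_carD by (simp add: E_add_inc zsection_add snd_E_add)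
  finally have eq: "madd E p q = madd E (?x, M.zer) (zsection (snd (madd E p q)))" .
  show ?thesis
    by (rule zretract_eq[OF _ _ eq]) (use p q zretract(1) in simp_all)
qed

lemma zretract_zelt:
  assumes p: "p \<in> mcar E"
  shows "zretract (mact E (zelt n c) p) = N.act (zelt n c) (zretract p)"
proof -
  let ?x = "N.act (zelt n c) (zretract p)"
  have "mact E (zelt n c) p = mact E (zelt n c) (madd E (zretract p, M.zer) (zsection (snd p)))"
    using zretract(2)[OF p] by simp
  also have "\<dots> = madd E (?x, M.zer) (zsection (snd (mact E (zelt n c) p)))"
    using p zretract(1)[OF p] E_carI zsection_E E_carD
    by (simp add: E.act_add E_act_inc zsection_zelt snd_E_act zelt_CQ)
  finally have eq: "mact E (zelt n c) p = madd E (?x, M.zer) (zsection (snd (mact E (zelt n c) p)))" .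
  show ?thesis
    by (rule zretract_eq[OF _ _ eq]) (use p zretract(1) in \<open>simp_all add: zelt_CQ\<close>)
qed

lemma zretract_inc: "x \<in> N.C \<Longrightarrow> zretract (x, M.zer) = x"
  by (rule zretract_eq) (simp_all add: zsection_zero E_carI)

definition ext_to_J :: "'k \<times> 'm \<Rightarrow> (qel \<Rightarrow> 'k)" where
  "ext_to_J = restrict (\<lambda>p. restrict (\<lambda>b. N.act (ev v) (zretract (mact E b p))) N.eAv) (mcar E)"

lemma ext_to_J_JC:
  assumes p: "p \<in> mcar E"
  shows "ext_to_J p \<in> N.JC"
  unfolding N.JC_eq
proof (intro CollectI conjI ballI allI)
  have r: "zretract (mact E b p) \<in> N.C" if "b \<in> N.eAv" for b
    using that p eA_CQ zretract(1) by simp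
  show "ext_to_J p \<in> extensional N.eAv"
    using p by (simp add: ext_to_J_def)
  show "ext_to_J p ` N.eAv \<subseteq> eV N v"
    using p r by (auto simp: ext_to_J_def eV_def)
  fix b assume b: "b \<in> N.eAv"
  show "ext_to_J p (qadd b c) = N.add (ext_to_J p b) (ext_to_J p c)" if c: "c \<in> N.eAv" for c
    using b c p r qadd_eA[OF b c]
    by (simp add: ext_to_J_def E.act_qadd zretract_add N.act_add N.ev_v_CQ eA_CQ)
  show "ext_to_J p (qmul n (zelt n z) b) = N.act (zelt n z) (ext_to_J p b)" for z
    using b p r zelt_eA[OF b] N.ev_zelt_comm
    by (simp add: ext_to_J_def E.act_qmul zretract_zelt zelt_CQ eA_CQ)
next
  fix b assume "b \<in> N.eAv \<inter> Ibar n m"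
  then show "ext_to_J p b = N.zer"
    using p zretract_inc E_zero N.ev_v_CQ by (simp add: ext_to_J_def E.act_Ibar)
qed

lemma ext_to_J_eA_maps: "p \<in> mcar E \<Longrightarrow> ext_to_J p \<in> N.eA_maps"
  using ext_to_J_JC N.JC_eA_maps by blast

lemma ext_to_J_hom: "ext_to_J \<in> hom n E (Jmod n m v N)"
  unfolding hom_def
proof (intro CollectI conjI ballI subsetI)
  show "ext_to_J \<in> extensional (mcar E)"
    by (simp add: ext_to_J_def)
  show "y \<in> N.JC" if "y \<in> ext_to_J ` mcar E" for y
    using that ext_to_J_JC by auto
next
  fix p q assume p: "p \<in> mcar E" and q: "q \<in> mcar E"
  show "ext_to_J (madd E p q) = madd (Jmod n m v N) (ext_to_J p) (ext_to_J q)"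
  proof (rule N.eA_maps_eqI)
    show "ext_to_J (madd E p q) \<in> N.eA_maps" "N.Jadd (ext_to_J p) (ext_to_J q) \<in> N.eA_maps"
      using p q by (simp_all add: ext_to_J_eA_maps N.Jadd_eA_maps)
    fix b assume "b \<in> N.eAv"
    then show "ext_to_J (madd E p q) b = N.Jadd (ext_to_J p) (ext_to_J q) b"
      using p q zretract(1) by (simp add: ext_to_J_def N.Jadd_eq E.act_add zretract_add N.act_add N.ev_v_CQ eA_CQ)
  qed
next
  fix a p assume a: "a \<in> CQ n" and p: "p \<in> mcar E"
  show "ext_to_J (mact E a p) = mact (Jmod n m v N) a (ext_to_J p)"
  proof (rule N.eA_maps_eqI)
    show "ext_to_J (mact E a p) \<in> N.eA_maps" "N.Jact a (ext_to_J p) \<in> N.eA_maps"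
      using p a by (simp_all add: ext_to_J_eA_maps N.Jact_eA_maps)
    fix b assume "b \<in> N.eAv"
    then show "ext_to_J (mact E a p) b = N.Jact a (ext_to_J p) b"
      using p a by (simp add: ext_to_J_def N.Jact_eq E.act_qmul qmul_right_eA eA_CQ)
  qed
qed

lemma ext_to_J_add: "p \<in> mcar E \<Longrightarrow> q \<in> mcar E \<Longrightarrow> ext_to_J (madd E p q) = N.Jadd (ext_to_J p) (ext_to_J q)"
  using ext_to_J_hom by (simp add: hom_def)

lemma ext_to_J_act: "a \<in> CQ n \<Longrightarrow> p \<in> mcar E \<Longrightarrow> ext_to_J (mact E a p) = N.Jact a (ext_to_J p)"
  using ext_to_J_hom by (simp add: hom_def)

lemma ext_to_J_inc:
  assumes x: "x \<in> N.C"
  shows "ext_to_J (x, M.zer) = N.uJ x"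
proof (rule N.eA_maps_eqI)
  show "ext_to_J (x, M.zer) \<in> N.eA_maps"
    using E_carI x by (simp add: ext_to_J_eA_maps)
  show "N.uJ x \<in> N.eA_maps"
    using x N.uJ_eA_maps by simp
  fix b assume b: "b \<in> N.eAv"
  then have "zretract (mact E b (x, M.zer)) = N.act b x"
    using E_act_inc zretract_inc x by (simp add: eA_CQ)
  then show "ext_to_J (x, M.zer) b = N.uJ x b"
    using b x N.act_ev_eV[OF N.act_eA_eV[OF b x]] E_carI by (simp add: ext_to_J_def N.uJ_eq)
qed

lemma ext_to_J_mem_class:
  assumes p: "p \<in> mcar E"
  shows "ext_to_J p \<in> N.omega_class (ext_to_J (N.zer, snd p))"
proof -
  have q: "(N.zer, snd p) \<in> mcar E"
    using E_carD[OF p] E_carI by simp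
  obtain x where x: "x \<in> N.C" "p = madd E (x, M.zer) (N.zer, snd p)"
    using E_eq_inc_add[OF p q] by auto
  have "ext_to_J p = ext_to_J (madd E (x, M.zer) (N.zer, snd p))"
    using x(2) by (rule arg_cong)
  also have "\<dots> = N.Jadd (ext_to_J (x, M.zer)) (ext_to_J (N.zer, snd p))"
    using x(1) E_carI q by (simp add: ext_to_J_add)
  also have "\<dots> = N.Jadd (ext_to_J (N.zer, snd p)) (N.uJ x)"
    using ext_to_J_inc[OF x(1)] N.Jadd_comm ext_to_J_eA_maps[OF q] N.uJ_eA_maps[OF x(1)] by simp
  finally show ?thesis
    using x by (auto simp: coset_def)
qed

definition ext_class :: "'m \<Rightarrow> (qel \<Rightarrow> 'k) set" where
  "ext_class = restrict (\<lambda>y. N.omega_class (ext_to_J (N.zer, y))) M.C"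

lemma ext_class_hom: "ext_class \<in> hom n M N.Om"
  unfolding hom_def
proof (intro CollectI conjI ballI subsetI)
  show "ext_class \<in> extensional M.C"
    by (simp add: ext_class_def)
  show "z \<in> mcar N.Om" if "z \<in> ext_class ` M.C" for z
    using that ext_to_J_JC E_carI by (auto simp: ext_class_def N.Om_car)
next
  fix y y' assume y: "y \<in> M.C" and y': "y' \<in> M.C"
  have c: "(N.zer, y) \<in> mcar E" "(N.zer, y') \<in> mcar E"
    using y y' E_carI by auto
  have "madd N.Om (ext_class y) (ext_class y') = N.omega_class (ext_to_J (madd E (N.zer, y) (N.zer, y')))"
    using y y' c by (simp add: ext_class_def N.Om_add ext_to_J_eA_maps ext_to_J_add)
  also have "\<dots> = N.omega_class (ext_to_J (N.zer, M.add y y'))"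
    using ext_to_J_mem_class[of "madd E (N.zer, y) (N.zer, y')"] c snd_E_add E_carI y y'
    by (simp add: N.omega_class_eq ext_to_J_eA_maps)
  finally show "ext_class (M.add y y') = madd N.Om (ext_class y) (ext_class y')"
    using y y' by (simp add: ext_class_def)
next
  fix a y assume a: "a \<in> CQ n" and y: "y \<in> M.C"
  have c: "(N.zer, y) \<in> mcar E"
    using y E_carI by auto
  have "mact N.Om a (ext_class y) = N.omega_class (ext_to_J (mact E a (N.zer, y)))"
    using y c a by (simp add: ext_class_def N.Om_act ext_to_J_eA_maps ext_to_J_act)
  also have "\<dots> = N.omega_class (ext_to_J (N.zer, M.act a y))"
    using ext_to_J_mem_class[of "mact E a (N.zer, y)"] c a snd_E_act E_carI y
    by (simp add: N.omega_class_eq ext_to_J_eA_maps)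
  finally show "ext_class (M.act a y) = mact N.Om a (ext_class y)"
    using y a by (simp add: ext_class_def)
qed

lemma represents_delta_ext_class: "represents_delta n m v M N E ext_class"
  unfolding represents_delta_def
proof (intro bexI conjI ballI)
  show "ext_to_J \<in> hom n E (Jmod n m v N)"
    by (rule ext_to_J_hom)
  fix x assume x: "x \<in> N.C"
  show "ext_to_J (x, mzero M) = unitJ n v N x"
    using ext_to_J_inc[OF x] by simp
  fix y assume y: "y \<in> M.C"
  show "ext_to_J (x, y) \<in> ext_class y"
    using ext_to_J_mem_class[of "(x, y)"] x y E_carI by (simp add: ext_class_def)
qed

end

theorem mainTheorem4:
  fixes n m :: nat and v :: int
    and M :: "'m amod" and N :: "'k amod"
  assumes "1 \<le> m" and "m < n"
    and "0 \<le> v" and "v < int n"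
    and "CM n m M" and "CM n m N"
  shows "\<exists>\<psi>.
     (\<forall>h\<in>homZ n v M N. \<psi> h \<in> hom n M (omega n m v N)) \<and>
     (\<forall>c. \<forall>h\<in>homZ n v M N. \<forall>h'\<in>homZ n v M N.
        \<psi> (homZ_lc n v M N c h h') = hom_lc n M (omega n m v N) c (\<psi> h) (\<psi> h')) \<and>
     {h \<in> homZ n v M N. \<psi> h = hom_zero M (omega n m v N)} = resv v M ` hom n M N \<and>
     \<psi> ` homZ n v M N =
       {f \<in> hom n M (omega n m v N).
          \<exists>E. is_ext n m M N E \<and> represents_delta n m v M N E f \<and> ext_splits n M N E} \<and>
     (\<forall>E. is_ext n m M N E \<longrightarrow> (\<exists>f\<in>hom n M (omega n m v N). represents_delta n m v M N E f))"
proof -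
  interpret vertex_pair n m M v N
    using assms by unfold_locales (auto simp: CM_def)
  have image: "omega_map ` homZ n v M N = {f \<in> hom n M (omega n m v N).
      \<exists>E. is_ext n m M N E \<and> represents_delta n m v M N E f \<and> ext_splits n M N E}"
    using omega_map_hom omega_map_image_subset omega_map_image_supset by blast
  have "\<exists>f\<in>hom n M (omega n m v N). represents_delta n m v M N E f" if "is_ext n m M N E" for E
  proof -
    interpret vertex_extension n m M v N E
      using that assms by unfold_locales (auto simp: CM_def)
    show ?thesis
      using ext_class_hom represents_delta_ext_class by blast
  qed
  with image show ?thesis
    using omega_map_hom omega_map_homZ_lc omega_map_kernel assms(6)
    by (intro exI[of _ omega_map]) (auto simp: CM_def)
qed

end
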